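(* Let $q$ be a prime power, $n \le m$, and let $\mathcal G(n,k)$ be a Gabidulin code of length $n$ and dimension $k$ over $\mathbb F_{q^m}$ with minimum rank distance $d = n-k+1$. Let $\tau < d$. Then for every $\mathbf r \in \mathbb F_{q^m}^n$, and hence for $\ell = \max_{\mathbf r \in \mathbb F_{q^m}^n} |\mathcal B_\tau(\mathbf r) \cap \mathcal G(n,k)|$, $$\ell \le \sum_{t = \lfloor (d-1)/2\rfloor + 1}^{\tau} \frac{\left[\begin{smallmatrix} n \\ 2t+1-d\end{smallmatrix}\right]_q}{\left[\begin{smallmatrix} t \\ 2t+1-d\end{smallmatrix}\right]_q} \le 4 \sum_{t = \lfloor (d-1)/2\rfloor + 1}^{\tau} q^{(2t-d+1)(n-t)} \le 4\left(\tau - \left\lfloor \tfrac{d-1}{2}\right\rfloor\right) q^{(2\tau - d+1)(n - \lfloor (d-1)/2\rfloor - 1)}.$$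
   Context: A linearized polynomial over $\mathbb F_{q^m}$ is $f(x) = \sum_{i} f_i x^{q^i}$ with $f_i \in \mathbb F_{q^m}$; its $q$-degree is the largest $i$ with $f_i \neq 0$. The Gabidulin code $\mathcal G(n,k)$ is $\{(f(\alpha_0), \dots, f(\alpha_{n-1})) : \deg_q f < k\}$ for fixed $\alpha_0,\dots,\alpha_{n-1} \in \mathbb F_{q^m}$ linearly independent over $\mathbb F_q$. Fixing a basis of $\mathbb F_{q^m}$ over $\mathbb F_q$, each $\mathbf x \in \mathbb F_{q^m}^n$ corresponds to a matrix in $\mathbb F_q^{m\times n}$, and $\mathrm{rank}(\mathbf x)$ is its $\mathbb F_q$-rank. Its minimum rank distance is $d=n-k+1$. $\mathcal B_\tau(\mathbf r)$ is the set of $\mathbf x \in \mathbb F_{q^m}^n$ with $\mathrm{rank}(\mathbf x - \mathbf r) \le \tau$. The Gaussian binomial is $\left[\begin{smallmatrix} n \\ s\end{smallmatrix}\right]_q = \prod_{i=0}^{s-1}\frac{q^n-q^i}{q^s-q^i}$. *)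

theory Defs
  imports Complex_Main "HOL-Computational_Algebra.Primes"
begin

text \<open>The field F_{q^m} is a finite field type 'a with CARD('a) = q^m; the subfield
  F_q is the set of elements fixed by the Frobenius x \<mapsto> x^q.\<close>
definition subfield_q :: "nat \<Rightarrow> ('a::field) set" where
  "subfield_q q = {x. x ^ q = x}"

definition q_indep :: "nat \<Rightarrow> ('a::field) list \<Rightarrow> nat set \<Rightarrow> bool" where
  "q_indep q v S \<longleftrightarrow> (\<forall>c. (\<forall>i\<in>S. c i \<in> subfield_q q) \<longrightarrow>
      (\<Sum>i\<in>S. c i * v ! i) = 0 \<longrightarrow> (\<forall>i\<in>S. c i = 0))"

text \<open>Rank of a vector: the F_q-rank of its m x n expansion matrix, i.e. the maximal
  number of F_q-linearly independent columns (= entries).\<close>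
definition rank_q :: "nat \<Rightarrow> ('a::field) list \<Rightarrow> nat" where
  "rank_q q v = Max {card S | S. S \<subseteq> {..<length v} \<and> q_indep q v S}"

definition lin_eval :: "nat \<Rightarrow> nat \<Rightarrow> (nat \<Rightarrow> 'a::field) \<Rightarrow> 'a \<Rightarrow> 'a" where
  "lin_eval q k c x = (\<Sum>i<k. c i * x ^ (q ^ i))"

definition gabidulin :: "nat \<Rightarrow> 'a list \<Rightarrow> nat \<Rightarrow> ('a::field) list set" where
  "gabidulin q alphas k = {map (lin_eval q k c) alphas | c. True}"

definition rank_ball :: "nat \<Rightarrow> nat \<Rightarrow> ('a::field) list \<Rightarrow> 'a list set" where
  "rank_ball q \<tau> r = {x. length x = length r \<and> rank_q q (map2 (-) x r) \<le> \<tau>}"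

definition gauss_binom :: "nat \<Rightarrow> nat \<Rightarrow> nat \<Rightarrow> real" where
  "gauss_binom q n s = (\<Prod>i<s. (real q ^ n - real q ^ i) / (real q ^ s - real q ^ i))"

end

(*
  An error e of rank t, viewed as an m x n matrix over F_q, has a t-dimensional row space
  R(e) in F_q^n.  For distinct codewords x, y with errors e_x = x - r and e_y = y - r,
  rank (x - y) >= d, while rank (e_x - e_y) <= dim (R(e_x) + R(e_y)); hence R(e_x) and R(e_y)
  meet in dimension at most rank e_x + rank e_y - d.  For codewords at rank distance t and
  s = 2t + 1 - d, the sets of s-tuples of independent vectors of R(e_x) are therefore
  pairwise disjoint subsets of the s-tuples of independent vectors of F_q^n, and counting
  bounds the number of such codewords by [n s]_q / [t s]_q.  At most one codeword lies within
  distance (d - 1)/2; if one does, the same count at t = (d - 1)/2 + 1 has room for it.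
*)

theory Submission
  imports Defs "HOL-Number_Theory.Residues" "HOL-Computational_Algebra.Polynomial"
    "HOL-Library.Function_Algebras" "HOL-Library.Product_Plus"
begin

section \<open>The subfield \<open>\<bbbF>\<^sub>q\<close> of a finite field\<close>

text \<open>The library's \<open>finite_field_power_card_eq_same\<close> needs the sort \<open>finite_field\<close>; here only
  \<open>{field, finite}\<close> is available, so Lagrange's theorem is applied to the multiplicative group.\<close>
lemma field_power_card_eq_self:
  fixes x :: "'a :: {field, finite}"
  shows "x ^ card (UNIV :: 'a set) = x"
proof (cases "x = 0")
  case False
  define G where "G = \<lparr>carrier = UNIV - {0 :: 'a}, monoid.mult = (*) :: 'a \<Rightarrow> 'a \<Rightarrow> 'a, one = 1\<rparr>"
  have "group G"
  proof (rule groupI)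
    fix y assume "y \<in> carrier G"
    then show "\<exists>z\<in>carrier G. z \<otimes>\<^bsub>G\<^esub> y = \<one>\<^bsub>G\<^esub>"
      by (intro bexI[of _ "inverse y"]) (auto simp: G_def)
  qed (auto simp: G_def)
  moreover have "y [^]\<^bsub>G\<^esub> n = y ^ n" for y :: 'a and n :: nat
    by (induction n) (simp_all add: G_def)
  moreover have "Coset.order G = card (UNIV :: 'a set) - 1"
    by (simp add: Coset.order_def G_def card_Diff_singleton)
  ultimately have "x ^ (card (UNIV :: 'a set) - 1) = 1"
    using group.pow_order_eq_1[of G x] False by (simp add: G_def)
  then have "x ^ Suc (card (UNIV :: 'a set) - 1) = x"
    by simp
  then show ?thesis
    using finite_UNIV_card_ge_0[where 'a = 'a] by simp
qed (simp add: finite_UNIV_card_ge_0)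

locale fq_subfield =
  fixes p e q m :: nat and K :: "'a :: {field, finite} set"
  assumes prime_p: "prime p" and e_pos: "e > 0" and q_eq: "q = p ^ e"
    and card_UNIV: "card (UNIV :: 'a set) = q ^ m"
    and K_eq: "K = subfield_q q"
begin

lemma q_ge_2: "q \<ge> 2"
proof -
  have "p ^ 1 \<le> p ^ e"
    using prime_gt_0_nat[OF prime_p] e_pos by (intro power_increasing) auto
  then show ?thesis
    using prime_ge_2_nat[OF prime_p] q_eq by simp
qed

lemma m_pos: "m > 0"
proof (rule ccontr)
  assume "\<not> m > 0"
  then have "card (UNIV :: 'a set) = 1"
    using card_UNIV by simp
  then have "(0 :: 'a) = 1"
    by (metis UNIV_I card_1_singletonE singletonD)
  then show False
    by simp
qed

lemma CHAR_eq: "CHAR('a) = p"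
proof -
  have prime_CHAR: "prime CHAR('a)"
    by (rule prime_CHAR_semidom[OF finite_imp_CHAR_pos]) simp
  have "CHAR('a) dvd p ^ (e * m)"
    using CHAR_dvd_CARD[where 'a = 'a] card_UNIV q_eq by (simp add: power_mult)
  then have "CHAR('a) dvd p"
    using prime_CHAR prime_dvd_power by blast
  then show ?thesis
    using prime_CHAR prime_p primes_dvd_imp_eq by blast
qed

lemma frobenius_sum: "(sum (f :: 'b \<Rightarrow> 'a) A) ^ (q ^ l) = (\<Sum>i\<in>A. f i ^ (q ^ l))"
  by (rule freshmans_dream_sum'[where n = "e * l"]) (simp_all add: CHAR_eq prime_p q_eq power_mult)

lemma frobenius_add: "((x :: 'a) + y) ^ (q ^ l) = x ^ (q ^ l) + y ^ (q ^ l)"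
  by (rule freshmans_dream'[where n = "e * l"]) (simp_all add: CHAR_eq prime_p q_eq power_mult)

lemma K_zero [simp]: "0 \<in> K"
  using q_ge_2 by (simp add: K_eq subfield_q_def)

lemma K_one [simp]: "1 \<in> K"
  by (simp add: K_eq subfield_q_def)

lemma K_add: "a \<in> K \<Longrightarrow> b \<in> K \<Longrightarrow> a + b \<in> K"
  using frobenius_add[of a b 1] by (simp add: K_eq subfield_q_def)

lemma K_uminus: "a \<in> K \<Longrightarrow> - a \<in> K"
  using frobenius_add[of "- a" a 1] q_ge_2
  by (simp add: K_eq subfield_q_def eq_neg_iff_add_eq_0 add.commute power_0_left)

lemma K_mult: "a \<in> K \<Longrightarrow> b \<in> K \<Longrightarrow> a * b \<in> K"
  by (simp add: K_eq subfield_q_def power_mult_distrib)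

lemma K_inverse: "a \<in> K \<Longrightarrow> inverse a \<in> K"
  by (simp add: K_eq subfield_q_def power_inverse)

lemma K_power_q_power: "a \<in> K \<Longrightarrow> a ^ (q ^ l) = a"
  by (induction l) (auto simp: K_eq subfield_q_def power_mult power_Suc2 simp del: power_Suc)

lemma card_K_le: "card K \<le> q"
proof -
  define P :: "'a poly" where "P = monom 1 q + - monom 1 1"
  have "degree P = q"
    using q_ge_2 unfolding P_def by (subst degree_add_eq_left) (auto simp: degree_monom_eq)
  moreover have "P \<noteq> 0"
    using q_ge_2 calculation by auto
  moreover have "K = {x. poly P x = 0}"
    by (auto simp: P_def poly_monom K_eq subfield_q_def)
  ultimately show ?thesis
    using card_poly_roots_bound[of P] by simp
qed

text \<open>\<open>X\<^bsup>q\<^sup>m\<^esup> - X = (X\<^sup>q - X) g\<close> with \<open>g = \<Sum>\<^sub>j\<^sub><\<^sub>N X\<^bsup>(q-1)j\<^esup>\<close>, \<open>N = (q\<^sup>m - 1)/(q - 1)\<close>,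
  and every element is a root of the left-hand side.\<close>
lemma exists_poly_vanishing_outside_K:
  obtains g :: "'a poly" where "g \<noteq> 0" "degree g \<le> q ^ m - q" "\<And>x. (x ^ q - x) * poly g x = 0"
proof -
  define N where "N = (\<Sum>i<m. q ^ i)"
  have "int q ^ m - 1 = (int q - 1) * (\<Sum>i<m. int q ^ i)"
    by (rule power_diff_1_eq)
  then have "int (q ^ m - 1) = int ((q - 1) * N)"
    using q_ge_2 unfolding N_def by (simp add: of_nat_diff)
  then have qN: "(q - 1) * N = q ^ m - 1"
    by linarith
  have "N \<ge> 1"
    using m_pos member_le_sum[of 0 "{..<m}" "\<lambda>i. q ^ i"] unfolding N_def by simp
  then obtain N' where N: "N = Suc N'"
    by (cases N) auto
  have qm: "q ^ m \<ge> q"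
    using power_increasing[of 1 m q] m_pos q_ge_2 by simp
  define g :: "'a poly" where "g = (\<Sum>j<N. monom 1 ((q - 1) * j))"
  have poly_g: "poly g x = (\<Sum>j<N. (x ^ (q - 1)) ^ j)" for x
    by (simp add: g_def poly_sum poly_monom power_mult)
  have "poly g 0 = 1"
    using q_ge_2 N by (simp add: poly_g sum.lessThan_Suc_shift power_0_left)
  then have "g \<noteq> 0"
    by auto
  moreover have "degree g \<le> (q - 1) * (N - 1)"
    unfolding g_def
    by (rule degree_sum_le) (auto intro!: order.trans[OF degree_monom_le] mult_le_mono2)
  moreover have "(q - 1) * (N - 1) = q ^ m - q"
    using qN q_ge_2 N by (simp add: algebra_simps diff_mult_distrib2)
  moreover have "(x ^ q - x) * poly g x = 0" for x :: 'a
  proof -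
    have "(x ^ (q - 1) - 1) * poly g x = (x ^ (q - 1)) ^ N - 1"
      by (simp add: poly_g power_diff_1_eq)
    also have "(x ^ (q - 1)) ^ N = x ^ (q ^ m - 1)"
      by (simp only: qN flip: power_mult)
    finally have g_eq: "(x ^ (q - 1) - 1) * poly g x = x ^ (q ^ m - 1) - 1" .
    have "x ^ q = x * x ^ (q - 1)" "x ^ (q ^ m) = x * x ^ (q ^ m - 1)"
      using q_ge_2 qm by (simp_all flip: power_Suc)
    then have "(x ^ q - x) * poly g x = x * ((x ^ (q - 1) - 1) * poly g x)"
      "x ^ (q ^ m) - x = x * (x ^ (q ^ m - 1) - 1)"
      by (simp_all add: algebra_simps)
    then have "(x ^ q - x) * poly g x = x ^ (q ^ m) - x"
      by (simp only: g_eq)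
    then show ?thesis
      using field_power_card_eq_self[of x] card_UNIV by simp
  qed
  ultimately show thesis
    by (intro that[of g]) auto
qed

lemma card_K_ge: "card K \<ge> q"
proof -
  obtain g :: "'a poly" where g: "g \<noteq> 0" "degree g \<le> q ^ m - q" "\<And>x. (x ^ q - x) * poly g x = 0"
    using exists_poly_vanishing_outside_K by blast
  have "UNIV \<subseteq> K \<union> {x. poly g x = 0}"
    using g(3) by (auto simp: K_eq subfield_q_def)
  then have "q ^ m \<le> card (K \<union> {x. poly g x = 0})"
    using card_UNIV card_mono[of "K \<union> {x. poly g x = 0}" UNIV] by simp
  also have "\<dots> \<le> card K + card {x. poly g x = 0}"
    by (rule card_Un_le)
  moreover have "q \<le> q ^ m"
    using power_increasing[of 1 m q] m_pos q_ge_2 by simp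
  ultimately show ?thesis
    using card_poly_roots_bound[OF g(1)] g(2) by linarith
qed

lemma card_K: "card K = q"
  using card_K_le card_K_ge by simp

end

section \<open>Linear algebra over a finite subfield\<close>

lemma card_eq_card_kernel_mult_card_image:
  fixes L :: "'v :: ab_group_add \<Rightarrow> 'w :: ab_group_add"
  assumes A: "finite A" "0 \<in> A" "\<And>x y. x \<in> A \<Longrightarrow> y \<in> A \<Longrightarrow> x + y \<in> A"
    "\<And>x. x \<in> A \<Longrightarrow> - x \<in> A"
    and L_add: "\<And>x y. x \<in> A \<Longrightarrow> y \<in> A \<Longrightarrow> L (x + y) = L x + L y"
  shows "card A = card {x\<in>A. L x = 0} * card (L ` A)"
proof -
  have L_uminus: "L (- x) = - L x" if "x \<in> A" for x
    using L_add[of x "- x"] L_add[of 0 0] that A by (simp add: eq_neg_iff_add_eq_0 add.commute)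
  have fibre: "{x\<in>A. L x = L a} = (\<lambda>z. a + z) ` {x\<in>A. L x = 0}" if "a \<in> A" for a
  proof (intro equalityI subsetI)
    fix x assume x: "x \<in> {x\<in>A. L x = L a}"
    then have "- a + x \<in> A"
      using A that by blast
    then have "- a + x \<in> {x\<in>A. L x = 0}"
      using x L_add[of "- a" x] L_uminus that A(4) by simp
    then show "x \<in> (\<lambda>z. a + z) ` {x\<in>A. L x = 0}"
      by (rule image_eqI[rotated]) simp
  qed (use A L_add that in auto)
  have "card A = card (\<Union>y\<in>L ` A. {x\<in>A. L x = y})"
    by (rule arg_cong[where f = card]) auto
  also have "\<dots> = (\<Sum>y\<in>L ` A. card {x\<in>A. L x = y})"
    using A(1) by (intro card_UN_disjoint) auto
  also have "\<dots> = (\<Sum>y\<in>L ` A. card {x\<in>A. L x = 0})"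
    by (intro sum.cong) (auto simp: fibre card_image inj_on_def)
  finally show ?thesis
    by simp
qed

lemma card_mult_le_card_UN_disjoint:
  assumes "finite I" "\<And>i. i \<in> I \<Longrightarrow> finite (F i)" "\<And>i. i \<in> I \<Longrightarrow> N \<le> card (F i)"
    and "\<And>i j. i \<in> I \<Longrightarrow> j \<in> I \<Longrightarrow> i \<noteq> j \<Longrightarrow> F i \<inter> F j = {}"
  shows "card I * N \<le> card (\<Union>i\<in>I. F i)"
proof -
  have "card I * N = (\<Sum>i\<in>I. N)"
    by simp
  also have "\<dots> \<le> (\<Sum>i\<in>I. card (F i))"
    using assms(3) by (rule sum_mono)
  also have "\<dots> = card (\<Union>i\<in>I. F i)"
    using assms by (intro card_UN_disjoint[symmetric]) auto
  finally show ?thesis .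
qed

lemma sum_fun_apply: "(sum (f :: 'b \<Rightarrow> 'c \<Rightarrow> 'd :: comm_monoid_add) A) i = (\<Sum>a\<in>A. f a i)"
  by (induction A rule: infinite_finite_induct) auto

locale subfield_module =
  fixes K :: "'a :: field set" and q :: nat and sc :: "'a \<Rightarrow> 'v :: ab_group_add \<Rightarrow> 'v"
  assumes K_zero: "0 \<in> K" and K_one: "1 \<in> K"
    and K_add: "a \<in> K \<Longrightarrow> b \<in> K \<Longrightarrow> a + b \<in> K"
    and K_uminus: "a \<in> K \<Longrightarrow> - a \<in> K"
    and K_mult: "a \<in> K \<Longrightarrow> b \<in> K \<Longrightarrow> a * b \<in> K"
    and K_inverse: "a \<in> K \<Longrightarrow> inverse a \<in> K"
    and finite_K: "finite K" and card_K: "card K = q"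
    and sc_add_right: "sc a (x + y) = sc a x + sc a y"
    and sc_add_left: "sc (a + b) x = sc a x + sc b x"
    and sc_sc: "sc (a * b) x = sc a (sc b x)"
    and sc_one: "sc 1 x = x"
begin

lemma sc_zero_left [simp]: "sc 0 x = 0"
  using sc_add_left[of 0 0 x] by simp

lemma sc_zero_right [simp]: "sc a 0 = 0"
  using sc_add_right[of a 0 0] by simp

lemma sc_uminus_right: "sc a (- x) = - sc a x"
  using sc_add_right[of a x "- x"] by (simp add: eq_neg_iff_add_eq_0 add.commute)

lemma sc_uminus_left: "sc (- a) x = - sc a x"
  using sc_add_left[of a "- a" x] by (simp add: eq_neg_iff_add_eq_0 add.commute)

lemma sc_diff_left: "sc (a - b) x = sc a x - sc b x"
  using sc_add_left[of a "- b" x] sc_uminus_left by simp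

lemma sc_sum_right: "sc a (sum f A) = (\<Sum>i\<in>A. sc a (f i))"
  by (induction A rule: infinite_finite_induct) (auto simp: sc_add_right)

lemma K_diff: "a \<in> K \<Longrightarrow> b \<in> K \<Longrightarrow> a - b \<in> K"
  using K_add K_uminus by (metis diff_conv_add_uminus)

lemma K_divide: "a \<in> K \<Longrightarrow> b \<in> K \<Longrightarrow> a / b \<in> K"
  using K_mult K_inverse by (metis divide_inverse)

lemma K_sum: "(\<And>i. i \<in> A \<Longrightarrow> f i \<in> K) \<Longrightarrow> sum f A \<in> K"
  by (induction A rule: infinite_finite_induct) (auto simp: K_zero K_add)

definition lin_span :: "(nat \<Rightarrow> 'v) \<Rightarrow> nat set \<Rightarrow> 'v set" where
  "lin_span g S = {\<Sum>i\<in>S. sc (c i) (g i) | c. \<forall>i\<in>S. c i \<in> K}"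

definition lin_indep :: "(nat \<Rightarrow> 'v) \<Rightarrow> nat set \<Rightarrow> bool" where
  "lin_indep g S \<longleftrightarrow>
     (\<forall>c. (\<forall>i\<in>S. c i \<in> K) \<longrightarrow> (\<Sum>i\<in>S. sc (c i) (g i)) = 0 \<longrightarrow> (\<forall>i\<in>S. c i = 0))"

definition lin_subspace :: "'v set \<Rightarrow> bool" where
  "lin_subspace V \<longleftrightarrow> 0 \<in> V \<and> (\<forall>x\<in>V. \<forall>y\<in>V. x + y \<in> V) \<and> (\<forall>a\<in>K. \<forall>x\<in>V. sc a x \<in> V)"

lemma lin_subspace_zero: "lin_subspace V \<Longrightarrow> 0 \<in> V"
  by (simp add: lin_subspace_def)

lemma lin_subspace_add: "lin_subspace V \<Longrightarrow> x \<in> V \<Longrightarrow> y \<in> V \<Longrightarrow> x + y \<in> V"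
  by (simp add: lin_subspace_def)

lemma lin_subspace_sc: "lin_subspace V \<Longrightarrow> a \<in> K \<Longrightarrow> x \<in> V \<Longrightarrow> sc a x \<in> V"
  by (simp add: lin_subspace_def)

lemma lin_subspace_uminus: "lin_subspace V \<Longrightarrow> x \<in> V \<Longrightarrow> - x \<in> V"
  using lin_subspace_sc[of V "- 1" x] K_one K_uminus by (simp add: sc_uminus_left sc_one)

lemma lin_subspace_diff: "lin_subspace V \<Longrightarrow> x \<in> V \<Longrightarrow> y \<in> V \<Longrightarrow> x - y \<in> V"
  using lin_subspace_add lin_subspace_uminus by (metis diff_conv_add_uminus)

lemma lin_subspace_sum: "lin_subspace V \<Longrightarrow> (\<And>i. i \<in> A \<Longrightarrow> f i \<in> V) \<Longrightarrow> sum f A \<in> V"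
  by (induction A rule: infinite_finite_induct) (auto simp: lin_subspace_zero lin_subspace_add)

lemma lin_span_cong: "(\<And>i. i \<in> S \<Longrightarrow> g i = h i) \<Longrightarrow> lin_span g S = lin_span h S"
  unfolding lin_span_def by (simp cong: sum.cong)

lemma lin_indep_cong: "(\<And>i. i \<in> S \<Longrightarrow> g i = h i) \<Longrightarrow> lin_indep g S = lin_indep h S"
  unfolding lin_indep_def by (simp cong: sum.cong)

lemma lin_indepD:
  "lin_indep g S \<Longrightarrow> \<forall>i\<in>S. c i \<in> K \<Longrightarrow> (\<Sum>i\<in>S. sc (c i) (g i)) = 0 \<Longrightarrow> i \<in> S \<Longrightarrow> c i = 0"
  unfolding lin_indep_def by blast

lemma lin_subspace_lin_span: "lin_subspace (lin_span g S)"
proof -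
  have add: "x + y \<in> lin_span g S" if x: "x \<in> lin_span g S" and y: "y \<in> lin_span g S" for x y
  proof -
    obtain c where "\<forall>i\<in>S. c i \<in> K" "x = (\<Sum>i\<in>S. sc (c i) (g i))"
      using x unfolding lin_span_def by blast
    moreover obtain d where "\<forall>i\<in>S. d i \<in> K" "y = (\<Sum>i\<in>S. sc (d i) (g i))"
      using y unfolding lin_span_def by blast
    ultimately show ?thesis
      unfolding lin_span_def
      by (auto intro!: exI[of _ "\<lambda>i. c i + d i"] simp: K_add sc_add_left sum.distrib)
  qed
  have sc: "sc a x \<in> lin_span g S" if a: "a \<in> K" and x: "x \<in> lin_span g S" for a x
  proof -
    obtain c where "\<forall>i\<in>S. c i \<in> K" "x = (\<Sum>i\<in>S. sc (c i) (g i))"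
      using x unfolding lin_span_def by blast
    then show ?thesis
      unfolding lin_span_def using a
      by (auto intro!: exI[of _ "\<lambda>i. a * c i"] simp: K_mult sc_sc sc_sum_right)
  qed
  have "0 \<in> lin_span g S"
    unfolding lin_span_def using K_zero by (auto intro!: exI[of _ "\<lambda>_. 0"])
  then show ?thesis
    unfolding lin_subspace_def using add sc by simp
qed

lemma lin_span_subset: "lin_subspace V \<Longrightarrow> (\<And>i. i \<in> S \<Longrightarrow> g i \<in> V) \<Longrightarrow> lin_span g S \<subseteq> V"
  unfolding lin_span_def by (auto intro!: lin_subspace_sum lin_subspace_sc)

lemma sum_sc_indicator:
  assumes "finite S" "i \<in> S"
  shows "(\<Sum>j\<in>S. sc (if j = i then a else 0) (g j)) = sc a (g i)"
proof -
  have "(\<Sum>j\<in>S. sc (if j = i then a else 0) (g j)) = (\<Sum>j\<in>S. if j = i then sc a (g i) else 0)"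
    by (intro sum.cong) auto
  then show ?thesis
    using assms by simp
qed

lemma in_lin_span: "finite S \<Longrightarrow> i \<in> S \<Longrightarrow> g i \<in> lin_span g S"
  unfolding lin_span_def using K_zero K_one sum_sc_indicator[of S i 1 g]
  by (auto simp: sc_one intro!: exI[of _ "\<lambda>j. if j = i then 1 else 0"])

lemma sum_insert_fun_upd:
  assumes "finite S" "i \<notin> S"
  shows "(\<Sum>j\<in>insert i S. sc ((c(i := a)) j) (g j)) = sc a (g i) + (\<Sum>j\<in>S. sc (c j) (g j))"
proof -
  have "(\<Sum>j\<in>S. sc ((c(i := a)) j) (g j)) = (\<Sum>j\<in>S. sc (c j) (g j))"
    using assms by (intro sum.cong) auto
  then show ?thesis
    using assms by simp
qed

lemma lin_span_insert:
  assumes "finite S" "i \<notin> S"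
  shows "lin_span g (insert i S) = (\<lambda>(a, y). sc a (g i) + y) ` (K \<times> lin_span g S)"
proof (intro equalityI subsetI)
  fix x assume "x \<in> lin_span g (insert i S)"
  then obtain c where c: "\<forall>j\<in>insert i S. c j \<in> K" "x = (\<Sum>j\<in>insert i S. sc (c j) (g j))"
    unfolding lin_span_def by blast
  have "(c i, \<Sum>j\<in>S. sc (c j) (g j)) \<in> K \<times> lin_span g S"
    using c(1) unfolding lin_span_def by auto
  moreover have "x = sc (c i) (g i) + (\<Sum>j\<in>S. sc (c j) (g j))"
    using c(2) assms by simp
  ultimately show "x \<in> (\<lambda>(a, y). sc a (g i) + y) ` (K \<times> lin_span g S)"
    by (metis (mono_tags) case_prod_conv rev_image_eqI)
next
  fix x assume "x \<in> (\<lambda>(a, y). sc a (g i) + y) ` (K \<times> lin_span g S)"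
  then obtain a y where "a \<in> K" "y \<in> lin_span g S" "x = sc a (g i) + y"
    by auto
  then obtain c where "a \<in> K" "\<forall>j\<in>S. c j \<in> K" "x = sc a (g i) + (\<Sum>j\<in>S. sc (c j) (g j))"
    unfolding lin_span_def by blast
  moreover have "\<forall>j\<in>insert i S. (c(i := a)) j \<in> K"
    using calculation by auto
  ultimately show "x \<in> lin_span g (insert i S)"
    unfolding lin_span_def using sum_insert_fun_upd[OF assms, of c a g]
    by (intro CollectI exI[of _ "c(i := a)"] conjI) simp_all
qed

lemma finite_lin_span: "finite S \<Longrightarrow> finite (lin_span g S)"
proof (induction S rule: finite_induct)
  case (insert i S)
  then show ?case
    using finite_K by (simp add: lin_span_insert)
qed (simp add: lin_span_def)

lemma lin_indep_insertD:
  assumes "finite S" "i \<notin> S" and indep: "lin_indep g (insert i S)"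
  shows "lin_indep g S" "g i \<notin> lin_span g S"
proof -
  have "\<forall>j\<in>S. c j = 0" if c: "\<forall>j\<in>S. c j \<in> K" "(\<Sum>j\<in>S. sc (c j) (g j)) = 0" for c
  proof -
    have "(\<Sum>j\<in>insert i S. sc ((c(i := 0)) j) (g j)) = 0"
      using sum_insert_fun_upd[OF assms(1,2), of c 0 g] c by simp
    moreover have "\<forall>j\<in>insert i S. (c(i := 0)) j \<in> K"
      using c K_zero by auto
    ultimately have "\<forall>j\<in>insert i S. (c(i := 0)) j = 0"
      using indep unfolding lin_indep_def by blast
    then show ?thesis
      using assms(2) by (metis fun_upd_other insertCI)
  qed
  then show "lin_indep g S"
    unfolding lin_indep_def by blast
  show "g i \<notin> lin_span g S"
  proof
    assume "g i \<in> lin_span g S"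
    then obtain c where c: "\<forall>j\<in>S. c j \<in> K" "g i = (\<Sum>j\<in>S. sc (c j) (g j))"
      unfolding lin_span_def by blast
    then have "(\<Sum>j\<in>insert i S. sc ((c(i := - 1)) j) (g j)) = 0"
      using sum_insert_fun_upd[OF assms(1,2), of c "- 1" g] by (simp add: sc_uminus_left sc_one)
    moreover have "\<forall>j\<in>insert i S. (c(i := - 1)) j \<in> K"
      using c K_one K_uminus by auto
    ultimately have "(c(i := - 1)) i = 0"
      using indep unfolding lin_indep_def by blast
    then show False
      by simp
  qed
qed

lemma lin_indep_insertI:
  assumes "finite S" "i \<notin> S" and S: "lin_indep g S" "g i \<notin> lin_span g S"
  shows "lin_indep g (insert i S)"
  unfolding lin_indep_def
proof (intro allI impI)
  fix c assume c: "\<forall>j\<in>insert i S. c j \<in> K" "(\<Sum>j\<in>insert i S. sc (c j) (g j)) = 0"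
  then have sum_eq: "sc (c i) (g i) = - (\<Sum>j\<in>S. sc (c j) (g j))"
    using assms(1,2) by (simp add: eq_neg_iff_add_eq_0)
  have "c i = 0"
  proof (rule ccontr)
    assume "c i \<noteq> 0"
    then have "g i = sc (inverse (c i)) (sc (c i) (g i))"
      by (simp flip: sc_sc add: sc_one)
    also have "\<dots> = (\<Sum>j\<in>S. sc (- inverse (c i) * c j) (g j))"
      by (simp add: sum_eq sc_uminus_right sc_sum_right sc_sc sc_uminus_left sum_negf)
    finally have "g i \<in> lin_span g S"
      unfolding lin_span_def using c K_mult K_uminus K_inverse
      by (auto intro!: exI[of _ "\<lambda>j. - inverse (c i) * c j"])
    then show False
      using S by blast
  qed
  then have sum_0: "(\<Sum>j\<in>S. sc (c j) (g j)) = 0"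
    using sum_eq by simp
  have "c j = 0" if "j \<in> S" for j
    using lin_indepD[OF S(1) _ sum_0 that] c(1) by simp
  then show "\<forall>j\<in>insert i S. c j = 0"
    using \<open>c i = 0\<close> by simp
qed

lemma lin_indep_insert:
  assumes "finite S" "i \<notin> S"
  shows "lin_indep g (insert i S) \<longleftrightarrow> lin_indep g S \<and> g i \<notin> lin_span g S"
  using lin_indep_insertD[OF assms] lin_indep_insertI[OF assms] by blast

lemma lin_indep_coeffs_unique:
  assumes "lin_indep g B" "\<forall>i\<in>B. c i \<in> K" "\<forall>i\<in>B. c' i \<in> K"
    "(\<Sum>i\<in>B. sc (c i) (g i)) = (\<Sum>i\<in>B. sc (c' i) (g i))" "i \<in> B"
  shows "c i = c' i"
proof -
  have "(\<Sum>i\<in>B. sc (c i - c' i) (g i)) = 0"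
    using assms(4) by (simp add: sc_diff_left sum_subtractf)
  moreover have "\<forall>i\<in>B. c i - c' i \<in> K"
    using assms(2,3) by (simp add: K_diff)
  ultimately have "c i - c' i = 0"
    using lin_indepD[OF assms(1), of "\<lambda>i. c i - c' i"] assms(5) by blast
  then show ?thesis
    by simp
qed

definition lin_coord :: "(nat \<Rightarrow> 'v) \<Rightarrow> nat set \<Rightarrow> 'v \<Rightarrow> nat \<Rightarrow> 'a" where
  "lin_coord g B x = (SOME c. (\<forall>i\<in>B. c i \<in> K) \<and> x = (\<Sum>i\<in>B. sc (c i) (g i)))"

lemma lin_coord:
  assumes "x \<in> lin_span g B"
  shows "(\<forall>i\<in>B. lin_coord g B x i \<in> K) \<and> x = (\<Sum>i\<in>B. sc (lin_coord g B x i) (g i))"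
proof -
  have "\<exists>c. (\<forall>i\<in>B. c i \<in> K) \<and> x = (\<Sum>i\<in>B. sc (c i) (g i))"
    using assms unfolding lin_span_def by blast
  then show ?thesis
    unfolding lin_coord_def by (rule someI_ex)
qed

lemma lin_coord_eq:
  assumes "lin_indep g B" "\<forall>i\<in>B. c i \<in> K" "x = (\<Sum>i\<in>B. sc (c i) (g i))" "i \<in> B"
  shows "lin_coord g B x i = c i"
proof -
  have "x \<in> lin_span g B"
    using assms(2,3) unfolding lin_span_def by blast
  then show ?thesis
    using lin_coord lin_indep_coeffs_unique[OF assms(1), of "lin_coord g B x" c i] assms(2-4) by simp
qed

lemma lin_coord_add:
  assumes "lin_indep g B" "x \<in> lin_span g B" "y \<in> lin_span g B" "i \<in> B"
  shows "lin_coord g B (x + y) i = lin_coord g B x i + lin_coord g B y i"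
  using lin_coord[OF assms(2)] lin_coord[OF assms(3)] assms(4)
  by (intro lin_coord_eq[OF assms(1)]) (auto simp: K_add sc_add_left sum.distrib)

lemma lin_coord_sc:
  assumes "lin_indep g B" "b \<in> K" "x \<in> lin_span g B" "i \<in> B"
  shows "lin_coord g B (sc b x) i = b * lin_coord g B x i"
proof -
  have x: "\<forall>i\<in>B. lin_coord g B x i \<in> K" "x = (\<Sum>i\<in>B. sc (lin_coord g B x i) (g i))"
    using lin_coord[OF assms(3)] by auto
  have "sc b x = sc b (\<Sum>i\<in>B. sc (lin_coord g B x i) (g i))"
    using x(2) by (rule arg_cong)
  also have "\<dots> = (\<Sum>i\<in>B. sc (b * lin_coord g B x i) (g i))"
    by (simp add: sc_sum_right sc_sc)
  finally have "sc b x = (\<Sum>i\<in>B. sc (b * lin_coord g B x i) (g i))" .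
  then show ?thesis
    using x(1) assms by (intro lin_coord_eq) (auto simp: K_mult)
qed

lemma lin_coord_basis:
  assumes "lin_indep g B" "finite B" "j \<in> B" "i \<in> B"
  shows "lin_coord g B (g j) i = (if i = j then 1 else 0)"
  using sum_sc_indicator[OF assms(2,3), of 1 g] assms K_zero K_one
  by (intro lin_coord_eq) (auto simp: sc_one)

lemma card_lin_span: "finite S \<Longrightarrow> lin_indep g S \<Longrightarrow> card (lin_span g S) = q ^ card S"
proof (induction S rule: finite_induct)
  case empty
  then show ?case
    by (simp add: lin_span_def)
next
  case (insert i S)
  then have indep: "lin_indep g S" and g_i: "g i \<notin> lin_span g S"
    using lin_indep_insert by blast+
  have "inj_on (\<lambda>(a, y). sc a (g i) + y) (K \<times> lin_span g S)"
  proof (rule inj_onI, clarify)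
    fix a y b y' assume ab: "a \<in> K" "y \<in> lin_span g S" "b \<in> K" "y' \<in> lin_span g S"
      and eq: "sc a (g i) + y = sc b (g i) + y'"
    have "a = b"
    proof (rule ccontr)
      assume "a \<noteq> b"
      have "sc (a - b) (g i) = y' - y"
        using eq by (simp add: sc_diff_left algebra_simps)
      then have "sc (inverse (a - b)) (sc (a - b) (g i)) = sc (inverse (a - b)) (y' - y)"
        by simp
      then have "g i = sc (inverse (a - b)) (y' - y)"
        using \<open>a \<noteq> b\<close> by (simp flip: sc_sc add: sc_one)
      moreover have "sc (inverse (a - b)) (y' - y) \<in> lin_span g S"
        using ab lin_subspace_lin_span by (intro lin_subspace_sc lin_subspace_diff K_inverse K_diff)
      ultimately show False
        using g_i by simp
    qed
    then show "a = b \<and> y = y'"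
      using eq by simp
  qed
  then have "card (lin_span g (insert i S)) = card (K \<times> lin_span g S)"
    using insert by (simp add: lin_span_insert card_image)
  also have "\<dots> = q * q ^ card S"
    using insert indep card_K by (simp add: card_cartesian_product)
  finally show ?case
    using insert by simp
qed

lemma exists_lin_indep_spanning_subset:
  assumes "finite T"
  obtains S where "S \<subseteq> T" "lin_indep g S" "lin_span g S = lin_span g T"
    "card S = Max {card S | S. S \<subseteq> T \<and> lin_indep g S}"
proof -
  let ?M = "{card S | S. S \<subseteq> T \<and> lin_indep g S}"
  have "?M \<subseteq> card ` Pow T"
    by auto
  then have fin: "finite ?M"
    using assms finite_subset by blast
  have "card {} \<in> ?M"
    by (intro CollectI exI[of _ "{}"]) (simp add: lin_indep_def)
  then have "Max ?M \<in> ?M"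
    using fin Max_in by blast
  then have "\<exists>S. Max ?M = card S \<and> S \<subseteq> T \<and> lin_indep g S"
    by (simp only: mem_Collect_eq)
  then obtain S where S: "S \<subseteq> T" "lin_indep g S" "card S = Max ?M"
    by metis
  have fin_S: "finite S"
    using S assms finite_subset by blast
  have "g j \<in> lin_span g S" if "j \<in> T" for j
  proof (rule ccontr)
    assume g_j: "g j \<notin> lin_span g S"
    then have "j \<notin> S"
      using in_lin_span[OF fin_S] by blast
    then have "card (insert j S) \<in> ?M"
      using lin_indep_insert[OF fin_S] g_j S that by blast
    then have "card (insert j S) \<le> Max ?M"
      using fin by simp
    then show False
      using \<open>j \<notin> S\<close> fin_S S by simp
  qed
  then have "lin_span g T \<subseteq> lin_span g S"
    by (rule lin_span_subset[OF lin_subspace_lin_span])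
  moreover have "lin_span g S \<subseteq> lin_span g T"
    using S assms by (intro lin_span_subset[OF lin_subspace_lin_span] in_lin_span) auto
  ultimately show ?thesis
    using that S by blast
qed

lemma card_lin_span_eq_power_Max:
  "finite T \<Longrightarrow> card (lin_span g T) = q ^ Max {card S | S. S \<subseteq> T \<and> lin_indep g S}"
proof -
  assume "finite T"
  then obtain S where "S \<subseteq> T" "lin_indep g S" "lin_span g S = lin_span g T"
    "card S = Max {card S | S. S \<subseteq> T \<and> lin_indep g S}"
    by (rule exists_lin_indep_spanning_subset)
  then show ?thesis
    using card_lin_span[of S g] finite_subset[OF _ \<open>finite T\<close>] by simp
qed

definition indep_lists :: "'v set \<Rightarrow> nat \<Rightarrow> 'v list set" where
  "indep_lists V s = {ws. length ws = s \<and> set ws \<subseteq> V \<and> lin_indep (nth ws) {..<s}}"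

lemma indep_lists_mono: "V \<subseteq> W \<Longrightarrow> indep_lists V s \<subseteq> indep_lists W s"
  by (auto simp: indep_lists_def)

lemma finite_indep_lists: "finite V \<Longrightarrow> finite (indep_lists V s)"
  by (rule finite_subset[OF _ finite_lists_length_eq[of V s]]) (auto simp: indep_lists_def)

lemma snoc_in_indep_lists_iff:
  assumes "length ws = s"
  shows "ws @ [x] \<in> indep_lists V (Suc s) \<longleftrightarrow>
    ws \<in> indep_lists V s \<and> x \<in> V - lin_span (nth ws) {..<s}"
proof -
  have nth: "(ws @ [x]) ! i = ws ! i" if "i \<in> {..<s}" for i
    using that assms by (simp add: nth_append)
  have "lin_indep (nth (ws @ [x])) {..<s} = lin_indep (nth ws) {..<s}"
    by (rule lin_indep_cong) (rule nth)
  moreover have "lin_span (nth (ws @ [x])) {..<s} = lin_span (nth ws) {..<s}"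
    by (rule lin_span_cong) (rule nth)
  moreover have "(ws @ [x]) ! s = x"
    using assms nth_append_length[of ws x] by simp
  ultimately have "lin_indep (nth (ws @ [x])) {..<Suc s} \<longleftrightarrow>
      lin_indep (nth ws) {..<s} \<and> x \<notin> lin_span (nth ws) {..<s}"
    using lin_indep_insert[of "{..<s}" s "nth (ws @ [x])"] by (simp add: lessThan_Suc)
  then show ?thesis
    using assms by (auto simp: indep_lists_def)
qed

lemma indep_lists_Suc:
  "indep_lists V (Suc s) = {ws @ [x] | ws x. ws \<in> indep_lists V s \<and> x \<in> V - lin_span (nth ws) {..<s}}"
proof (intro equalityI subsetI)
  fix ws' assume ws': "ws' \<in> indep_lists V (Suc s)"
  then have "ws' = butlast ws' @ [last ws']" "length (butlast ws') = s"
    by (auto simp: indep_lists_def intro!: append_butlast_last_id[symmetric])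
  then show "ws' \<in> {ws @ [x] | ws x. ws \<in> indep_lists V s \<and> x \<in> V - lin_span (nth ws) {..<s}}"
    using ws' snoc_in_indep_lists_iff[of "butlast ws'" s "last ws'" V] by auto
next
  fix ws' assume "ws' \<in> {ws @ [x] | ws x. ws \<in> indep_lists V s \<and> x \<in> V - lin_span (nth ws) {..<s}}"
  then obtain ws x where "ws' = ws @ [x]" "ws \<in> indep_lists V s" "x \<in> V - lin_span (nth ws) {..<s}"
    by blast
  moreover have "length ws = s"
    using calculation(2) by (simp add: indep_lists_def)
  ultimately show "ws' \<in> indep_lists V (Suc s)"
    using snoc_in_indep_lists_iff by blast
qed

lemma card_snoc_indep_lists:
  assumes W: "lin_subspace W" "finite W" and T: "T \<subseteq> indep_lists W s"
  shows "card {ws @ [x] | ws x. ws \<in> T \<and> x \<in> W - lin_span (nth ws) {..<s}} = card T * (card W - q ^ s)"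
proof -
  have "{ws @ [x] | ws x. ws \<in> T \<and> x \<in> W - lin_span (nth ws) {..<s}}
      = (\<lambda>(ws, x). ws @ [x]) ` (SIGMA ws:T. W - lin_span (nth ws) {..<s})"
    by auto
  moreover have "inj_on (\<lambda>(ws, x). ws @ [x]) (SIGMA ws:T. W - lin_span (nth ws) {..<s})"
    by (rule inj_onI) auto
  moreover have "card (W - lin_span (nth ws) {..<s}) = card W - q ^ s" if "ws \<in> T" for ws
  proof -
    have ws: "length ws = s" "set ws \<subseteq> W" "lin_indep (nth ws) {..<s}"
      using that T by (auto simp: indep_lists_def)
    then have "lin_span (nth ws) {..<s} \<subseteq> W"
      by (intro lin_span_subset[OF W(1)]) auto
    then show ?thesis
      using ws card_lin_span card_Diff_subset[OF finite_lin_span] by simp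
  qed
  moreover have "finite T"
    using finite_indep_lists[OF W(2)] T finite_subset by blast
  ultimately show ?thesis
    using W(2) by (simp add: card_image card_SigmaI)
qed

lemma card_indep_lists:
  assumes "lin_subspace V" "finite V"
  shows "card (indep_lists V s) = (\<Prod>i<s. card V - q ^ i)"
proof (induction s)
  case 0
  have "indep_lists V 0 = {[]}"
    by (auto simp: indep_lists_def lin_indep_def)
  then show ?case
    by simp
next
  case (Suc s)
  have "card (indep_lists V (Suc s)) = card (indep_lists V s) * (card V - q ^ s)"
    unfolding indep_lists_Suc by (rule card_snoc_indep_lists[OF assms]) simp
  then show ?case
    using Suc by simp
qed

end

section \<open>Entry spans, functionals and row spaces\<close>

sublocale fq_subfield \<subseteq> F: subfield_module K q "(*) :: 'a \<Rightarrow> 'a \<Rightarrow> 'a"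
  by unfold_locales (auto simp: K_add K_uminus K_mult K_inverse card_K algebra_simps)

sublocale fq_subfield \<subseteq> Fn: subfield_module K q "\<lambda>a (w :: nat \<Rightarrow> 'a) i. a * w i"
  by unfold_locales (auto simp: K_add K_uminus K_mult K_inverse card_K algebra_simps fun_eq_iff)

context fq_subfield
begin

definition coord_space :: "nat \<Rightarrow> (nat \<Rightarrow> 'a) set" where
  "coord_space n = {w. (\<forall>i<n. w i \<in> K) \<and> (\<forall>i\<ge>n. w i = 0)}"

lemma coord_space_zero: "0 \<in> coord_space n"
  by (simp add: coord_space_def)

lemma coord_space_add: "x \<in> coord_space n \<Longrightarrow> y \<in> coord_space n \<Longrightarrow> x + y \<in> coord_space n"
  by (simp add: coord_space_def K_add)

lemma coord_space_uminus: "x \<in> coord_space n \<Longrightarrow> - x \<in> coord_space n"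
  by (simp add: coord_space_def K_uminus)

lemma lin_subspace_coord_space: "Fn.lin_subspace (coord_space n)"
  unfolding Fn.lin_subspace_def coord_space_def by (auto simp: K_add K_mult)

lemma bij_betw_coord_space_PiE:
  "bij_betw (\<lambda>w. restrict w {..<n}) (coord_space n) (PiE {..<n} (\<lambda>_. K))"
proof (rule bij_betwI[where g = "\<lambda>c i. if i < n then c i else 0"])
  show "(\<lambda>c i. if i < n then c i else 0) \<in> PiE {..<n} (\<lambda>_. K) \<rightarrow> coord_space n"
    by (auto simp: coord_space_def PiE_iff)
  show "restrict (\<lambda>i. if i < n then c i else 0) {..<n} = c" if "c \<in> PiE {..<n} (\<lambda>_. K)" for c
    using that PiE_arb[OF that] by (auto simp: fun_eq_iff)
qed (auto simp: coord_space_def fun_eq_iff)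

lemma finite_coord_space: "finite (coord_space n)"
  using bij_betw_finite[OF bij_betw_coord_space_PiE] finite_PiE[of "{..<n}" "\<lambda>_. K"] by simp

lemma card_coord_space: "card (coord_space n) = q ^ n"
  using bij_betw_same_card[OF bij_betw_coord_space_PiE] by (simp add: card_PiE card_K)

definition entry_span :: "'a list \<Rightarrow> 'a set" where
  "entry_span v = F.lin_span (nth v) {..<length v}"

lemma lin_subspace_entry_span: "F.lin_subspace (entry_span v)"
  unfolding entry_span_def by (rule F.lin_subspace_lin_span)

lemma nth_in_entry_span: "i < length v \<Longrightarrow> v ! i \<in> entry_span v"
  unfolding entry_span_def by (rule F.in_lin_span) auto

lemma q_indep_iff_lin_indep: "q_indep q v S = F.lin_indep (nth v) S"
  unfolding q_indep_def F.lin_indep_def by (simp add: K_eq)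

lemma card_entry_span: "card (entry_span v) = q ^ rank_q q v"
  unfolding entry_span_def rank_q_def q_indep_iff_lin_indep by (rule F.card_lin_span_eq_power_Max) simp

text \<open>Only the values on \<open>S\<close> matter: outside \<open>S\<close> the function is arbitrary.\<close>
definition klinear_on :: "'a set \<Rightarrow> ('a \<Rightarrow> 'a) \<Rightarrow> bool" where
  "klinear_on S \<phi> \<longleftrightarrow> (\<forall>x\<in>S. \<phi> x \<in> K) \<and> (\<forall>x\<in>S. \<forall>y\<in>S. \<phi> (x + y) = \<phi> x + \<phi> y)
     \<and> (\<forall>a\<in>K. \<forall>x\<in>S. \<phi> (a * x) = a * \<phi> x)"

lemma klinear_on_in_K: "klinear_on S \<phi> \<Longrightarrow> x \<in> S \<Longrightarrow> \<phi> x \<in> K"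
  by (simp add: klinear_on_def)

lemma klinear_on_add: "klinear_on S \<phi> \<Longrightarrow> x \<in> S \<Longrightarrow> y \<in> S \<Longrightarrow> \<phi> (x + y) = \<phi> x + \<phi> y"
  by (simp add: klinear_on_def)

lemma klinear_on_mult: "klinear_on S \<phi> \<Longrightarrow> a \<in> K \<Longrightarrow> x \<in> S \<Longrightarrow> \<phi> (a * x) = a * \<phi> x"
  by (simp add: klinear_on_def)

lemma klinear_on_zero: "klinear_on S \<phi> \<Longrightarrow> F.lin_subspace S \<Longrightarrow> \<phi> 0 = 0"
  using klinear_on_add[of S \<phi> 0 0] F.lin_subspace_zero[of S]
  by (metis add.right_neutral add_left_cancel)

lemma klinear_on_diff:
  assumes "klinear_on S \<phi>" "F.lin_subspace S" "x \<in> S" "y \<in> S"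
  shows "\<phi> (x - y) = \<phi> x - \<phi> y"
  using klinear_on_add[OF assms(1) F.lin_subspace_diff[OF assms(2,3,4)] assms(4)] by simp

lemma klinear_on_sum:
  assumes "klinear_on S \<phi>" "F.lin_subspace S" "\<And>i. i \<in> A \<Longrightarrow> c i \<in> K" "\<And>i. i \<in> A \<Longrightarrow> g i \<in> S"
  shows "\<phi> (\<Sum>i\<in>A. c i * g i) = (\<Sum>i\<in>A. c i * \<phi> (g i))"
  using assms(3,4)
proof (induction A rule: infinite_finite_induct)
  case (insert i A)
  have "(\<Sum>j\<in>A. c j * g j) \<in> S" "c i * g i \<in> S"
    using insert assms(2) by (auto intro!: F.lin_subspace_sum F.lin_subspace_sc)
  then show ?case
    using insert klinear_on_add[OF assms(1)] klinear_on_mult[OF assms(1)] by simp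
qed (use klinear_on_zero[OF assms(1,2)] in simp_all)

text \<open>The \<open>\<bbbF>\<^sub>q\<close>-row space of the \<open>m \<times> n\<close> matrix expanding \<open>v\<close>: its rows are the images of
  the entries of \<open>v\<close> under the coordinate functionals.\<close>
definition row_space :: "'a list \<Rightarrow> (nat \<Rightarrow> 'a) set" where
  "row_space v = {w \<in> coord_space (length v). \<exists>\<phi>. klinear_on (entry_span v) \<phi> \<and> (\<forall>i<length v. w i = \<phi> (v ! i))}"

lemma row_space_subset: "row_space v \<subseteq> coord_space (length v)"
  by (auto simp: row_space_def)

lemma finite_row_space: "finite (row_space v)"
  using row_space_subset finite_coord_space finite_subset by blast

lemma lin_subspace_row_space: "Fn.lin_subspace (row_space v)"
proof -
  have "x + y \<in> row_space v" if x: "x \<in> row_space v" and y: "y \<in> row_space v" for x y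
  proof -
    obtain \<phi> \<psi> where "klinear_on (entry_span v) \<phi>" "\<forall>i<length v. x i = \<phi> (v ! i)"
      "klinear_on (entry_span v) \<psi>" "\<forall>i<length v. y i = \<psi> (v ! i)"
      using x y by (auto simp: row_space_def)
    moreover have "x + y \<in> coord_space (length v)"
      using x y row_space_subset coord_space_add by blast
    ultimately show ?thesis
      unfolding row_space_def klinear_on_def
      by (auto intro!: exI[of _ "\<lambda>z. \<phi> z + \<psi> z"] simp: K_add algebra_simps)
  qed
  moreover have "(\<lambda>i. a * x i) \<in> row_space v" if a: "a \<in> K" and x: "x \<in> row_space v" for a x
  proof -
    obtain \<phi> where "klinear_on (entry_span v) \<phi>" "\<forall>i<length v. x i = \<phi> (v ! i)"
      "x \<in> coord_space (length v)"
      using x by (auto simp: row_space_def)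
    then show ?thesis
      using a unfolding row_space_def klinear_on_def coord_space_def
      by (auto intro!: exI[of _ "\<lambda>z. a * \<phi> z"] simp: K_mult algebra_simps)
  qed
  moreover have "0 \<in> row_space v"
    unfolding row_space_def klinear_on_def using coord_space_zero by (auto intro!: exI[of _ "\<lambda>_. 0"])
  ultimately show ?thesis
    unfolding Fn.lin_subspace_def by blast
qed

lemma exists_klinear_on_basis_values:
  assumes B: "finite B" "F.lin_indep g B" and a: "\<forall>i\<in>B. a i \<in> K"
  shows "\<exists>\<phi>. klinear_on (F.lin_span g B) \<phi> \<and> (\<forall>j\<in>B. \<phi> (g j) = a j)"
proof -
  define \<phi> where "\<phi> x = (\<Sum>i\<in>B. a i * F.lin_coord g B x i)" for x
  have "\<phi> x \<in> K" if "x \<in> F.lin_span g B" for x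
    unfolding \<phi>_def using a F.lin_coord[OF that] by (intro F.K_sum K_mult) auto
  moreover have "\<phi> (x + y) = \<phi> x + \<phi> y" if "x \<in> F.lin_span g B" "y \<in> F.lin_span g B" for x y
    unfolding \<phi>_def using F.lin_coord_add[OF B(2) that] by (simp add: distrib_left sum.distrib)
  moreover have "\<phi> (b * x) = b * \<phi> x" if "b \<in> K" "x \<in> F.lin_span g B" for b x
    unfolding \<phi>_def using F.lin_coord_sc[OF B(2) that]
    by (simp add: sum_distrib_left algebra_simps)
  moreover have "\<phi> (g j) = a j" if "j \<in> B" for j
  proof -
    have "\<phi> (g j) = (\<Sum>i\<in>B. if i = j then a j else 0)"
      unfolding \<phi>_def using F.lin_coord_basis[OF B(2,1) that] by (intro sum.cong) auto
    then show ?thesis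
      using B(1) that by simp
  qed
  ultimately show ?thesis
    unfolding klinear_on_def by blast
qed

lemma card_row_space_ge: "q ^ rank_q q v \<le> card (row_space v)"
proof -
  let ?n = "length v"
  obtain B where B: "B \<subseteq> {..<?n}" "F.lin_indep (nth v) B" "F.lin_span (nth v) B = entry_span v"
    "card B = rank_q q v"
    using F.exists_lin_indep_spanning_subset[of "{..<?n}" "nth v"]
    unfolding entry_span_def rank_q_def q_indep_iff_lin_indep by auto
  have fin_B: "finite B"
    using B(1) by (rule finite_subset) simp
  define \<Phi> where
    "\<Phi> a = (SOME \<phi>. klinear_on (entry_span v) \<phi> \<and> (\<forall>j\<in>B. \<phi> (v ! j) = a j))" for a
  have \<Phi>: "klinear_on (entry_span v) (\<Phi> a) \<and> (\<forall>j\<in>B. \<Phi> a (v ! j) = a j)"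
    if "a \<in> PiE B (\<lambda>_. K)" for a
  proof -
    have "\<exists>\<phi>. klinear_on (entry_span v) \<phi> \<and> (\<forall>j\<in>B. \<phi> (v ! j) = a j)"
      using exists_klinear_on_basis_values[OF fin_B B(2), of a] that B(3) by (simp add: PiE_iff)
    then show ?thesis
      unfolding \<Phi>_def by (rule someI_ex)
  qed
  define W where "W a = (\<lambda>i. if i < ?n then \<Phi> a (v ! i) else 0)" for a
  have "W a \<in> row_space v" if "a \<in> PiE B (\<lambda>_. K)" for a
    using \<Phi>[OF that] klinear_on_in_K nth_in_entry_span
    unfolding row_space_def coord_space_def W_def by fastforce
  moreover have "inj_on W (PiE B (\<lambda>_. K))"
  proof (rule inj_onI)
    fix a b assume ab: "a \<in> PiE B (\<lambda>_. K)" "b \<in> PiE B (\<lambda>_. K)" and "W a = W b"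
    have "a j = b j" if "j \<in> B" for j
    proof -
      have "j < ?n"
        using that B(1) by auto
      then have "\<Phi> a (v ! j) = \<Phi> b (v ! j)"
        using fun_cong[OF \<open>W a = W b\<close>, of j] by (simp add: W_def)
      then show ?thesis
        using \<Phi>[OF ab(1)] \<Phi>[OF ab(2)] that by simp
    qed
    then show "a = b"
      using ab by (intro PiE_ext) auto
  qed
  ultimately have "card (PiE B (\<lambda>_. K)) \<le> card (row_space v)"
    using finite_row_space by (intro card_inj_on_le) auto
  then show ?thesis
    using B(4) fin_B by (simp add: card_PiE card_K)
qed

lemma prod_le_card_indep_lists_row_space:
  "(\<Prod>i<s. q ^ rank_q q v - q ^ i) \<le> card (Fn.indep_lists (row_space v) s)"
proof -
  have "(\<Prod>i<s. q ^ rank_q q v - q ^ i) \<le> (\<Prod>i<s. card (row_space v) - q ^ i)"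
    using card_row_space_ge[of v] by (intro prod_mono) auto
  then show ?thesis
    by (simp add: Fn.card_indep_lists[OF lin_subspace_row_space finite_row_space])
qed

definition indep_functionals :: "'a set \<Rightarrow> (nat \<Rightarrow> 'a \<Rightarrow> 'a) \<Rightarrow> nat \<Rightarrow> bool" where
  "indep_functionals S \<phi> j \<longleftrightarrow>
     (\<forall>c. (\<forall>l<j. c l \<in> K) \<longrightarrow> (\<forall>x\<in>S. (\<Sum>l<j. c l * \<phi> l x) = 0) \<longrightarrow> (\<forall>l<j. c l = 0))"

lemma indep_functionals_Suc_imp:
  assumes indep: "indep_functionals S \<phi> (Suc j)"
  shows "indep_functionals S \<phi> j"
  unfolding indep_functionals_def
proof (intro allI impI)
  fix c l assume c: "\<forall>l<j. c l \<in> K" "\<forall>x\<in>S. (\<Sum>l<j. c l * \<phi> l x) = 0" and "l < j"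
  have "\<forall>l<Suc j. (c(j := 0)) l \<in> K" "\<forall>x\<in>S. (\<Sum>l<Suc j. (c(j := 0)) l * \<phi> l x) = 0"
    using c by (auto simp: less_Suc_eq)
  then have "\<forall>l<Suc j. (c(j := 0)) l = 0"
    using indep unfolding indep_functionals_def by blast
  then show "c l = 0"
    using \<open>l < j\<close> by (metis fun_upd_apply less_SucI less_irrefl_nat)
qed

lemma functionals_onto_Suc:
  assumes S: "F.lin_subspace S" and lin: "\<forall>l<Suc j. klinear_on S (\<phi> l)"
    and onto: "\<forall>y\<in>coord_space j. \<exists>x\<in>S. \<forall>l<j. \<phi> l x = y l"
    and z: "z \<in> S" "\<forall>l<j. \<phi> l z = 0" "\<phi> j z \<noteq> 0"
  shows "\<forall>y\<in>coord_space (Suc j). \<exists>x\<in>S. \<forall>l<Suc j. \<phi> l x = y l"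
proof
  fix y assume y: "y \<in> coord_space (Suc j)"
  then have "y(j := 0) \<in> coord_space j"
    unfolding coord_space_def by auto
  then obtain x where x: "x \<in> S" "\<forall>l<j. \<phi> l x = y l"
    using onto by auto
  define a where "a = (y j - \<phi> j x) / \<phi> j z"
  have "y j \<in> K" "\<phi> j x \<in> K" "\<phi> j z \<in> K"
    using y lin x(1) z(1) klinear_on_in_K by (auto simp: coord_space_def)
  then have "a \<in> K"
    unfolding a_def by (intro F.K_divide F.K_diff)
  then have az: "a * z \<in> S"
    using F.lin_subspace_sc[OF S _ z(1)] by simp
  have "\<phi> l (x + a * z) = y l" if "l < Suc j" for l
  proof -
    have "\<phi> l (x + a * z) = \<phi> l x + a * \<phi> l z"
      using lin that klinear_on_add[OF _ x(1) az] klinear_on_mult[OF _ \<open>a \<in> K\<close> z(1)] by simp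
    then show ?thesis
      using that x z by (auto simp: a_def less_Suc_eq)
  qed
  then show "\<exists>x\<in>S. \<forall>l<Suc j. \<phi> l x = y l"
    using F.lin_subspace_add[OF S x(1) az] by blast
qed

lemma exists_dual_basis:
  assumes "\<forall>y\<in>coord_space j. \<exists>x\<in>S. \<forall>l<j. \<phi> l x = y l"
  obtains u where "\<And>l. l < j \<Longrightarrow> u l \<in> S"
    "\<And>l m. l < j \<Longrightarrow> m < j \<Longrightarrow> \<phi> m (u l) = (if m = l then 1 else 0)"
proof -
  have "\<forall>l. \<exists>u. l < j \<longrightarrow> u \<in> S \<and> (\<forall>m<j. \<phi> m u = (if m = l then 1 else 0))"
  proof
    fix l
    have "l < j \<Longrightarrow> (\<lambda>m. if m = l then 1 else 0) \<in> coord_space j"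
      by (auto simp: coord_space_def)
    then show "\<exists>u. l < j \<longrightarrow> u \<in> S \<and> (\<forall>m<j. \<phi> m u = (if m = l then 1 else 0))"
      using assms by fastforce
  qed
  then show thesis
    using that by metis
qed

text \<open>If the first \<open>j\<close> functionals are jointly onto and the next one vanishes on their
  joint kernel, it is a combination of them, with coefficients its values on a dual basis.\<close>
lemma functional_in_span_of_onto:
  assumes S: "F.lin_subspace S" and lin: "\<forall>l<Suc j. klinear_on S (\<phi> l)"
    and onto: "\<forall>y\<in>coord_space j. \<exists>x\<in>S. \<forall>l<j. \<phi> l x = y l"
    and ker: "\<forall>x\<in>S. (\<forall>l<j. \<phi> l x = 0) \<longrightarrow> \<phi> j x = 0"
  obtains c where "\<forall>l<j. c l \<in> K" "\<forall>x\<in>S. \<phi> j x = (\<Sum>l<j. c l * \<phi> l x)"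
proof -
  obtain u where u: "\<And>l. l < j \<Longrightarrow> u l \<in> S"
    "\<And>l m. l < j \<Longrightarrow> m < j \<Longrightarrow> \<phi> m (u l) = (if m = l then 1 else 0)"
    using exists_dual_basis[OF onto] by blast
  have "\<phi> j x = (\<Sum>l<j. \<phi> j (u l) * \<phi> l x)" if x: "x \<in> S" for x
  proof -
    define x' where "x' = (\<Sum>l<j. \<phi> l x * u l)"
    have K_x: "\<phi> l x \<in> K" if "l < j" for l
      using lin that by (intro klinear_on_in_K[OF _ x]) simp
    have x': "x' \<in> S"
      unfolding x'_def using K_x u(1) by (intro F.lin_subspace_sum[OF S] F.lin_subspace_sc[OF S]) auto
    have \<phi>_x': "\<phi> m x' = (\<Sum>l<j. \<phi> l x * \<phi> m (u l))" if "m < Suc j" for m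
    proof -
      have "klinear_on S (\<phi> m)"
        using lin that by simp
      then show ?thesis
        unfolding x'_def using K_x u(1) by (rule klinear_on_sum[OF _ S]) auto
    qed
    have "\<phi> m x' = \<phi> m x" if "m < j" for m
    proof -
      have "(\<Sum>l<j. \<phi> l x * \<phi> m (u l)) = (\<Sum>l<j. if l = m then \<phi> m x else 0)"
        using that u(2) by (intro sum.cong) auto
      then show ?thesis
        using \<phi>_x'[of m] that by simp
    qed
    then have "\<forall>l<j. \<phi> l (x - x') = 0"
      using klinear_on_diff[OF _ S x x', of "\<phi> _"] lin by simp
    then have "\<phi> j (x - x') = 0"
      using ker F.lin_subspace_diff[OF S x x'] by blast
    then have "\<phi> j x = \<phi> j x'"
      using klinear_on_diff[OF _ S x x', of "\<phi> j"] lin by simp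
    then show ?thesis
      using \<phi>_x'[of j] by (simp add: mult.commute)
  qed
  moreover have "\<forall>l<j. \<phi> j (u l) \<in> K"
    using lin u(1) by (auto intro: klinear_on_in_K)
  ultimately show thesis
    by (intro that[of "\<lambda>l. \<phi> j (u l)"]) auto
qed

lemma indep_functionals_onto:
  assumes S: "F.lin_subspace S" and lin: "\<forall>l<j. klinear_on S (\<phi> l)"
    and indep: "indep_functionals S \<phi> j"
  shows "\<forall>y\<in>coord_space j. \<exists>x\<in>S. \<forall>l<j. \<phi> l x = y l"
  using lin indep
proof (induction j)
  case 0
  then show ?case
    using F.lin_subspace_zero[OF S] by blast
next
  case (Suc j)
  then have onto: "\<forall>y\<in>coord_space j. \<exists>x\<in>S. \<forall>l<j. \<phi> l x = y l"
    using indep_functionals_Suc_imp by simp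
  show ?case
  proof (cases "\<exists>z\<in>S. (\<forall>l<j. \<phi> l z = 0) \<and> \<phi> j z \<noteq> 0")
    case True
    then show ?thesis
      using functionals_onto_Suc[OF S Suc.prems(1) onto] by blast
  next
    case False
    then obtain c where c: "\<forall>l<j. c l \<in> K" "\<forall>x\<in>S. \<phi> j x = (\<Sum>l<j. c l * \<phi> l x)"
      using functional_in_span_of_onto[OF S Suc.prems(1) onto] by blast
    define c' where "c' l = (if l < j then - c l else 1)" for l
    have "\<forall>l<Suc j. c' l \<in> K"
      using c(1) by (auto simp: c'_def K_uminus)
    moreover have "\<forall>x\<in>S. (\<Sum>l<Suc j. c' l * \<phi> l x) = 0"
      using c(2) by (simp add: c'_def sum_negf)
    ultimately have "c' j = 0"
      using Suc.prems(2) unfolding indep_functionals_def by blast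
    then show ?thesis
      by (simp add: c'_def)
  qed
qed

lemma exists_row_functionals:
  assumes "set ws \<subseteq> row_space v"
  obtains \<phi> where "\<forall>l<length ws. klinear_on (entry_span v) (\<phi> l) \<and> (\<forall>i<length v. (ws ! l) i = \<phi> l (v ! i))"
proof -
  have "\<forall>l. \<exists>\<phi>. l < length ws \<longrightarrow> klinear_on (entry_span v) \<phi> \<and> (\<forall>i<length v. (ws ! l) i = \<phi> (v ! i))"
    using assms nth_mem unfolding row_space_def by blast
  then show thesis
    using that by metis
qed

lemma klinear_on_entry_span_lin_comb:
  assumes "klinear_on (entry_span v) \<phi>" "b \<in> coord_space (length v)"
  shows "\<phi> (\<Sum>i<length v. b i * v ! i) = (\<Sum>i<length v. b i * \<phi> (v ! i))"
  using assms by (intro klinear_on_sum[OF _ lin_subspace_entry_span])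
    (auto simp: coord_space_def nth_in_entry_span)

lemma indep_functionals_of_lin_indep_rows:
  assumes \<phi>: "\<forall>l<j. klinear_on (entry_span v) (\<phi> l) \<and> (\<forall>i<length v. (ws ! l) i = \<phi> l (v ! i))"
    and ws: "ws \<in> Fn.indep_lists (row_space v) j"
  shows "indep_functionals (entry_span v) \<phi> j"
  unfolding indep_functionals_def
proof (intro allI impI)
  fix c l assume c: "\<forall>l<j. c l \<in> K" "\<forall>x\<in>entry_span v. (\<Sum>l<j. c l * \<phi> l x) = 0" and "l < j"
  have ws_row: "ws ! l' \<in> row_space v" if "l' < j" for l'
    using ws that nth_mem by (fastforce simp: Fn.indep_lists_def)
  have "(\<Sum>l'<j. (\<lambda>i. c l' * (ws ! l') i)) i = 0" for i
  proof (cases "i < length v")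
    case True
    then show ?thesis
      using c(2) \<phi> nth_in_entry_span[OF True] by (simp add: sum_fun_apply)
  next
    case False
    then have "(ws ! l') i = 0" if "l' < j" for l'
      using ws_row[OF that] row_space_subset[of v] False by (auto simp: coord_space_def)
    then show ?thesis
      by (simp add: sum_fun_apply)
  qed
  then show "c l = 0"
    using Fn.lin_indepD[of "nth ws" "{..<j}" c l] ws c(1) \<open>l < j\<close>
    by (simp add: Fn.indep_lists_def fun_eq_iff)
qed

lemma entry_span_map2_diff:
  assumes "length v2 = length v1"
  shows "entry_span (map2 (-) v1 v2) =
    (\<lambda>b. (\<Sum>i<length v1. b i * v1 ! i) - (\<Sum>i<length v1. b i * v2 ! i)) ` coord_space (length v1)"
    (is "_ = ?f ` _")
proof (intro equalityI subsetI)
  fix z assume "z \<in> entry_span (map2 (-) v1 v2)"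
  then obtain c where c: "\<forall>i<length v1. c i \<in> K" "z = (\<Sum>i<length v1. c i * (v1 ! i - v2 ! i))"
    using assms unfolding entry_span_def F.lin_span_def by auto
  define b where "b i = (if i < length v1 then c i else 0)" for i
  have "z = ?f b"
    unfolding c(2) b_def by (simp add: sum_subtractf right_diff_distrib)
  moreover have "b \<in> coord_space (length v1)"
    using c(1) by (simp add: b_def coord_space_def)
  ultimately show "z \<in> ?f ` coord_space (length v1)"
    by blast
next
  fix z assume "z \<in> ?f ` coord_space (length v1)"
  then obtain b where "b \<in> coord_space (length v1)" "z = ?f b"
    by blast
  then show "z \<in> entry_span (map2 (-) v1 v2)"
    using assms unfolding entry_span_def F.lin_span_def coord_space_def
    by (auto simp: sum_subtractf right_diff_distrib intro!: exI[of _ b])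
qed

lemma card_agreeing_pairs_mult_le:
  assumes S: "F.lin_subspace S1" "F.lin_subspace S2" "finite S1" "finite S2"
    and lin: "\<forall>l<j. klinear_on S1 (\<phi>1 l) \<and> klinear_on S2 (\<phi>2 l)"
    and onto: "\<forall>y\<in>coord_space j. \<exists>x\<in>S1. \<forall>l<j. \<phi>1 l x = y l"
  shows "card {p \<in> S1 \<times> S2. \<forall>l<j. \<phi>1 l (fst p) = \<phi>2 l (snd p)} * q ^ j \<le> card S1 * card S2"
proof -
  define \<Psi> where "\<Psi> p = (\<lambda>l. if l < j then \<phi>1 l (fst p) - \<phi>2 l (snd p) else 0)" for p
  have "\<Psi> (x + y) l = (\<Psi> x + \<Psi> y) l" if "x \<in> S1 \<times> S2" "y \<in> S1 \<times> S2" for x y l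
    using that lin klinear_on_add[of S1 "\<phi>1 l"] klinear_on_add[of S2 "\<phi>2 l"]
    by (cases "l < j") (auto simp: \<Psi>_def mem_Times_iff)
  then have card_eq: "card (S1 \<times> S2) = card {p \<in> S1 \<times> S2. \<Psi> p = 0} * card (\<Psi> ` (S1 \<times> S2))"
    using S by (intro card_eq_card_kernel_mult_card_image)
      (auto simp: fun_eq_iff zero_prod_def F.lin_subspace_zero F.lin_subspace_add F.lin_subspace_uminus)
  have "coord_space j \<subseteq> \<Psi> ` (S1 \<times> S2)"
  proof
    fix y assume y: "y \<in> coord_space j"
    then obtain x where x: "x \<in> S1" "\<forall>l<j. \<phi>1 l x = y l"
      using onto by blast
    have "\<Psi> (x, 0) = y"
      using x y lin klinear_on_zero[OF _ S(2)] by (auto simp: \<Psi>_def coord_space_def)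
    then show "y \<in> \<Psi> ` (S1 \<times> S2)"
      using x(1) F.lin_subspace_zero[OF S(2)] by force
  qed
  then have "q ^ j \<le> card (\<Psi> ` (S1 \<times> S2))"
    using card_mono[OF finite_imageI] S(3,4) card_coord_space by (metis finite_SigmaI)
  moreover have "\<Psi> p = 0 \<longleftrightarrow> (\<forall>l<j. \<phi>1 l (fst p) = \<phi>2 l (snd p))" for p
    by (simp add: \<Psi>_def fun_eq_iff)
  ultimately show ?thesis
    using card_eq by (simp add: card_cartesian_product)
qed

lemma card_entry_span_diff_le_agreeing_pairs:
  assumes len: "length v2 = length v1"
    and \<phi>1: "\<forall>l<j. klinear_on (entry_span v1) (\<phi>1 l) \<and> (\<forall>i<length v1. (ws ! l) i = \<phi>1 l (v1 ! i))"
    and \<phi>2: "\<forall>l<j. klinear_on (entry_span v2) (\<phi>2 l) \<and> (\<forall>i<length v1. (ws ! l) i = \<phi>2 l (v2 ! i))"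
  shows "card (entry_span (map2 (-) v1 v2))
    \<le> card {p \<in> entry_span v1 \<times> entry_span v2. \<forall>l<j. \<phi>1 l (fst p) = \<phi>2 l (snd p)}"
    (is "_ \<le> card ?P")
proof -
  let ?n = "length v1"
  define pair where "pair b = (\<Sum>i<?n. b i * v1 ! i, \<Sum>i<?n. b i * v2 ! i)" for b
  have "pair b \<in> ?P" if b: "b \<in> coord_space ?n" for b
  proof -
    have "fst (pair b) \<in> entry_span v1" "snd (pair b) \<in> entry_span v2"
      using b len unfolding pair_def entry_span_def F.lin_span_def coord_space_def by auto
    moreover have "\<phi>1 l (fst (pair b)) = \<phi>2 l (snd (pair b))" if "l < j" for l
      using that b len \<phi>1 \<phi>2 klinear_on_entry_span_lin_comb[of v1 "\<phi>1 l" b]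
        klinear_on_entry_span_lin_comb[of v2 "\<phi>2 l" b] by (simp add: pair_def)
    ultimately show ?thesis
      by (simp add: mem_Times_iff)
  qed
  then have "pair ` coord_space ?n \<subseteq> ?P"
    by blast
  moreover have "finite ?P"
    unfolding entry_span_def by (simp add: F.finite_lin_span)
  ultimately have "card (pair ` coord_space ?n) \<le> card ?P"
    by (simp add: card_mono)
  moreover have "entry_span (map2 (-) v1 v2) = (\<lambda>p. fst p - snd p) ` pair ` coord_space ?n"
    unfolding entry_span_map2_diff[OF len] image_image pair_def by simp
  then have "card (entry_span (map2 (-) v1 v2)) \<le> card (pair ` coord_space ?n)"
    using finite_coord_space by (simp add: card_image_le)
  ultimately show ?thesis
    by linarith
qed

text \<open>In matrix terms, \<open>rank (A\<^sub>1 - A\<^sub>2) \<le> dim (R\<^sub>1 + R\<^sub>2)\<close> for the row spaces \<open>R\<^sub>1, R\<^sub>2\<close>.  The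
  \<open>j\<close> common rows give functionals \<open>\<phi>\<^sub>1, \<phi>\<^sub>2\<close> on the entry spans; \<open>(x, y) \<mapsto> \<phi>\<^sub>1 x - \<phi>\<^sub>2 y\<close> is
  onto \<open>\<bbbF>\<^sub>q\<^sup>j\<close>, and its kernel contains the pairs \<open>(\<Sum> b\<^sub>i v\<^sub>1\<^sub>i, \<Sum> b\<^sub>i v\<^sub>2\<^sub>i)\<close>, whose differences
  exhaust the entry span of \<open>v\<^sub>1 - v\<^sub>2\<close>.\<close>
lemma card_entry_span_diff_mult_le:
  assumes len: "length v2 = length v1"
    and ws: "ws \<in> Fn.indep_lists (row_space v1 \<inter> row_space v2) j"
  shows "card (entry_span (map2 (-) v1 v2)) * q ^ j \<le> card (entry_span v1) * card (entry_span v2)"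
proof -
  have ws1: "ws \<in> Fn.indep_lists (row_space v1) j"
    using ws Fn.indep_lists_mono by blast
  then have "length ws = j" "set ws \<subseteq> row_space v1" "set ws \<subseteq> row_space v2"
    using ws by (auto simp: Fn.indep_lists_def)
  then obtain \<phi>1 \<phi>2 where
    \<phi>1: "\<forall>l<j. klinear_on (entry_span v1) (\<phi>1 l) \<and> (\<forall>i<length v1. (ws ! l) i = \<phi>1 l (v1 ! i))" and
    \<phi>2: "\<forall>l<j. klinear_on (entry_span v2) (\<phi>2 l) \<and> (\<forall>i<length v1. (ws ! l) i = \<phi>2 l (v2 ! i))"
    using exists_row_functionals len by metis
  have "card {p \<in> entry_span v1 \<times> entry_span v2. \<forall>l<j. \<phi>1 l (fst p) = \<phi>2 l (snd p)} * q ^ j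
      \<le> card (entry_span v1) * card (entry_span v2)"
    using \<phi>1 \<phi>2 indep_functionals_onto[OF lin_subspace_entry_span _ indep_functionals_of_lin_indep_rows[OF _ ws1]]
    by (intro card_agreeing_pairs_mult_le lin_subspace_entry_span)
      (auto simp: entry_span_def F.finite_lin_span)
  then show ?thesis
    using card_entry_span_diff_le_agreeing_pairs[OF len \<phi>1 \<phi>2] by (meson le_trans mult_le_mono1)
qed

lemma rank_map2_diff_add_le:
  assumes "length v2 = length v1" "ws \<in> Fn.indep_lists (row_space v1 \<inter> row_space v2) j"
  shows "rank_q q (map2 (-) v1 v2) + j \<le> rank_q q v1 + rank_q q v2"
proof -
  have "q ^ (rank_q q (map2 (-) v1 v2) + j) \<le> q ^ (rank_q q v1 + rank_q q v2)"
    using card_entry_span_diff_mult_le[OF assms] by (simp add: card_entry_span power_add)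
  then show ?thesis
    using q_ge_2 by (simp add: power_increasing_iff)
qed

section \<open>Gabidulin codes\<close>

lemma lin_eval_sum:
  assumes "\<forall>i\<in>A. b i \<in> K"
  shows "lin_eval q k f (\<Sum>i\<in>A. b i * a i) = (\<Sum>i\<in>A. b i * lin_eval q k f (a i))"
proof -
  have "(\<Sum>i\<in>A. b i * a i) ^ (q ^ l) = (\<Sum>i\<in>A. b i * a i ^ (q ^ l))" for l
    unfolding frobenius_sum using assms by (intro sum.cong) (auto simp: power_mult_distrib K_power_q_power)
  then have "lin_eval q k f (\<Sum>i\<in>A. b i * a i) = (\<Sum>l<k. \<Sum>i\<in>A. b i * (f l * a i ^ (q ^ l)))"
    unfolding lin_eval_def by (simp add: sum_distrib_left mult.left_commute)
  also have "\<dots> = (\<Sum>i\<in>A. b i * lin_eval q k f (a i))"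
    unfolding lin_eval_def by (subst sum.swap) (simp add: sum_distrib_left)
  finally show ?thesis .
qed

lemma card_lin_eval_roots_le:
  fixes f :: "nat \<Rightarrow> 'a"
  assumes "lin_eval q k f x0 \<noteq> 0"
  shows "card {x. lin_eval q k f x = 0} \<le> q ^ (k - 1)"
proof -
  define P :: "'a poly" where "P = (\<Sum>l<k. monom (f l) (q ^ l))"
  have poly_P: "poly P x = lin_eval q k f x" for x
    unfolding P_def lin_eval_def by (simp add: poly_sum poly_monom)
  then have "P \<noteq> 0"
    using assms by auto
  moreover have "degree P \<le> q ^ (k - 1)"
    unfolding P_def using q_ge_2
    by (intro degree_sum_le) (auto intro!: order.trans[OF degree_monom_le] power_increasing)
  ultimately show ?thesis
    using card_poly_roots_bound[of P] poly_P by simp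
qed

lemma inj_on_lin_comb_coord_space:
  assumes "q_indep q alphas {..<n}"
  shows "inj_on (\<lambda>b. \<Sum>i<n. b i * alphas ! i) (coord_space n)"
proof (rule inj_onI)
  fix b b' assume b: "b \<in> coord_space n" "b' \<in> coord_space n"
    and eq: "(\<Sum>i<n. b i * alphas ! i) = (\<Sum>i<n. b' i * alphas ! i)"
  have "b i = b' i" if "i < n" for i
    using F.lin_indep_coeffs_unique[of "nth alphas" "{..<n}" b b' i] assms b eq that
    by (simp add: q_indep_iff_lin_indep coord_space_def)
  then show "b = b'"
    using b unfolding coord_space_def fun_eq_iff by (metis (mono_tags) mem_Collect_eq not_less)
qed

text \<open>Evaluation \<open>b \<mapsto> \<Sum> b\<^sub>i f(\<alpha>\<^sub>i)\<close> maps \<open>\<bbbF>\<^sub>q\<^sup>n\<close> into the entry span of the codeword, and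
  its kernel embeds, via \<open>b \<mapsto> \<Sum> b\<^sub>i \<alpha>\<^sub>i\<close>, into the at most \<open>q\<^bsup>k-1\<^esup>\<close> roots of \<open>f\<close>.\<close>
lemma rank_gabidulin_codeword_ge:
  fixes alphas :: "'a list"
  assumes alphas: "length alphas = n" "q_indep q alphas {..<n}" and "1 \<le> k"
    and nonzero: "i0 < n" "lin_eval q k f (alphas ! i0) \<noteq> 0"
  shows "n < k + rank_q q (map (lin_eval q k f) alphas)"
proof -
  let ?c = "map (lin_eval q k f) alphas"
  define L where "L b = (\<Sum>i<n. b i * ?c ! i)" for b
  define M where "M b = (\<Sum>i<n. b i * alphas ! i)" for b
  let ?ker = "{b\<in>coord_space n. L b = 0}"
  have card_split: "card (coord_space n) = card ?ker * card (L ` coord_space n)"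
    by (rule card_eq_card_kernel_mult_card_image)
      (simp_all add: finite_coord_space coord_space_zero coord_space_add coord_space_uminus
        L_def distrib_right sum.distrib)
  have "L ` coord_space n \<subseteq> entry_span ?c"
    using alphas(1) unfolding L_def entry_span_def F.lin_span_def coord_space_def by auto
  then have card_L_image: "card (L ` coord_space n) \<le> q ^ rank_q q ?c"
    unfolding card_entry_span[symmetric] entry_span_def by (intro card_mono F.finite_lin_span) auto
  have "lin_eval q k f (M b) = L b" if "b \<in> coord_space n" for b
    using that alphas(1) lin_eval_sum[of "{..<n}" b k f "nth alphas"]
    by (simp add: L_def M_def coord_space_def)
  then have M_ker: "M ` ?ker \<subseteq> {x. lin_eval q k f x = 0}"
    by (simp add: image_subset_iff)
  have "card ?ker = card (M ` ?ker)"
    using inj_on_subset[OF inj_on_lin_comb_coord_space[OF alphas(2)], of ?ker] unfolding M_def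
    by (simp add: card_image)
  also have "\<dots> \<le> card {x. lin_eval q k f x = 0}"
    using M_ker by (intro card_mono) auto
  also have "\<dots> \<le> q ^ (k - 1)"
    by (rule card_lin_eval_roots_le[OF nonzero(2)])
  finally have "card ?ker * card (L ` coord_space n) \<le> q ^ (k - 1) * q ^ rank_q q ?c"
    using card_L_image by (rule mult_le_mono)
  then have "q ^ n \<le> q ^ (k - 1) * q ^ rank_q q ?c"
    using card_split card_coord_space by simp
  then have "n \<le> k - 1 + rank_q q ?c"
    using q_ge_2 by (simp add: power_add[symmetric] power_increasing_iff)
  then show ?thesis
    using \<open>1 \<le> k\<close> by linarith
qed

lemma map2_diff_gabidulin:
  assumes "x = map (lin_eval q k f) alphas" "y = map (lin_eval q k g) alphas"
  shows "map2 (-) x y = map (lin_eval q k (\<lambda>l. f l - g l)) alphas"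
  using assms by (simp add: map2_map_map lin_eval_def sum_subtractf left_diff_distrib)

lemma rank_diff_gabidulin_gt:
  fixes alphas :: "'a list"
  assumes "length alphas = n" "q_indep q alphas {..<n}" "1 \<le> k"
    and "x \<in> gabidulin q alphas k" "y \<in> gabidulin q alphas k" "x \<noteq> y"
  shows "n < k + rank_q q (map2 (-) x y)"
proof -
  obtain f g where fg: "x = map (lin_eval q k f) alphas" "y = map (lin_eval q k g) alphas"
    using assms(4,5) unfolding gabidulin_def by blast
  moreover have "length x = n" "length y = n"
    using fg assms(1) by simp_all
  ultimately obtain i0 where "i0 < n" "x ! i0 \<noteq> y ! i0"
    using assms(6) nth_equalityI by metis
  then have "lin_eval q k (\<lambda>l. f l - g l) (alphas ! i0) \<noteq> 0"
    using fg assms(1) by (simp add: lin_eval_def sum_subtractf left_diff_distrib)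
  then show ?thesis
    using rank_gabidulin_codeword_ge[OF assms(1-3) \<open>i0 < n\<close>] map2_diff_gabidulin[OF fg] by simp
qed

end

lemma finite_gabidulin: "finite (gabidulin q (alphas :: 'a :: {field, finite} list) k)"
  by (rule finite_subset[OF _ finite_lists_length_eq[of UNIV "length alphas"]]) (auto simp: gabidulin_def)

section \<open>Estimates for Gaussian binomials\<close>

definition indep_tuples_count :: "nat \<Rightarrow> nat \<Rightarrow> nat \<Rightarrow> real" where
  "indep_tuples_count q n s = (\<Prod>i<s. real q ^ n - real q ^ i)"

lemma of_nat_prod_power_diff:
  assumes "q \<ge> 1" "s \<le> t"
  shows "real (\<Prod>i<s. q ^ t - q ^ i) = indep_tuples_count q t s"
  unfolding indep_tuples_count_def of_nat_prod
  using assms by (intro prod.cong refl) (simp add: of_nat_diff power_increasing)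

lemma indep_tuples_count_pos:
  assumes "q \<ge> 2" "s \<le> t"
  shows "0 < indep_tuples_count q t s"
  unfolding indep_tuples_count_def using assms
  by (intro prod_pos) (auto simp: power_strict_increasing)

lemma indep_tuples_count_mono:
  assumes "q \<ge> 2" "s \<le> t" "t \<le> n"
  shows "indep_tuples_count q t s \<le> indep_tuples_count q n s"
  unfolding indep_tuples_count_def using assms
  by (intro prod_mono) (auto simp: less_imp_le power_strict_increasing power_increasing)

lemma gauss_binom_ratio:
  assumes "q \<ge> 2"
  shows "gauss_binom q n s / gauss_binom q t s = indep_tuples_count q n s / indep_tuples_count q t s"
proof -
  have "(\<Prod>i<s. real q ^ s - real q ^ i) \<noteq> 0"
    using indep_tuples_count_pos[OF assms order.refl, of s] unfolding indep_tuples_count_def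
    by linarith
  then show ?thesis
    unfolding gauss_binom_def indep_tuples_count_def prod_dividef by simp
qed

lemma indep_tuples_count_le:
  assumes "q \<ge> 2" "s \<le> n"
  shows "indep_tuples_count q n s \<le> real q ^ (n * s)"
proof -
  have "indep_tuples_count q n s \<le> (\<Prod>i<s. real q ^ n)"
    unfolding indep_tuples_count_def using assms
    by (intro prod_mono) (auto simp: less_imp_le power_strict_increasing)
  then show ?thesis
    by (simp add: power_mult)
qed

lemma one_minus_sum_le_prod_one_minus:
  fixes a :: "nat \<Rightarrow> real"
  assumes "\<And>i. i \<in> A \<Longrightarrow> 0 \<le> a i \<and> a i \<le> 1"
  shows "1 - (\<Sum>i\<in>A. a i) \<le> (\<Prod>i\<in>A. 1 - a i)"
  using assms
proof (induction A rule: infinite_finite_induct)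
  case (insert i A)
  then have "1 - (\<Sum>j\<in>insert i A. a j) \<le> (1 - a i) * (1 - (\<Sum>j\<in>A. a j))"
    by (simp add: algebra_simps sum_nonneg)
  also have "\<dots> \<le> (1 - a i) * (\<Prod>j\<in>A. 1 - a j)"
    using insert by (intro mult_left_mono) auto
  finally show ?case
    using insert by simp
qed auto

lemma sum_power_le_half:
  fixes x :: real
  assumes x: "0 \<le> x" "x \<le> 1 / 2" and "r < t"
  shows "(\<Sum>i<r. x ^ (t - i)) \<le> 1 / 2"
proof -
  have "(\<Sum>i<r. x ^ (t - i)) = (\<Sum>i<r. x ^ (t - (r - Suc i)))"
    by (rule sum.nat_diff_reindex[symmetric])
  also have "\<dots> \<le> (\<Sum>i<r. x ^ 2 * x ^ i)"
  proof (rule sum_mono)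
    fix i assume "i \<in> {..<r}"
    then have "2 + i \<le> t - (r - Suc i)"
      using \<open>r < t\<close> by auto
    then have "x ^ (t - (r - Suc i)) \<le> x ^ (2 + i)"
      using x by (intro power_decreasing) auto
    then show "x ^ (t - (r - Suc i)) \<le> x ^ 2 * x ^ i"
      by (simp only: power_add)
  qed
  also have "\<dots> = x ^ 2 * ((1 - x ^ r) / (1 - x))"
    using x by (simp add: sum_distrib_left[symmetric] sum_gp_strict)
  also have "\<dots> \<le> (1 / 2) ^ 2 * 2"
  proof (intro mult_mono power_mono)
    have "0 \<le> x ^ r"
      using x by simp
    then have "1 - x ^ r \<le> 2 * (1 - x)"
      using x by (subst right_diff_distrib) linarith
    then show "(1 - x ^ r) / (1 - x) \<le> 2"
      using x by (simp add: pos_divide_le_eq)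
  qed (use x power_le_one[of x r] in auto)
  finally show ?thesis
    by (simp add: power2_eq_square)
qed

lemma prod_one_minus_power_ge:
  fixes x :: real
  assumes x: "0 \<le> x" "x \<le> 1 / 2" and "1 \<le> s" "s \<le> t"
  shows "1 / 4 \<le> (\<Prod>i<s. 1 - x ^ (t - i))"
proof -
  obtain r where r: "s = Suc r"
    using \<open>1 \<le> s\<close> by (cases s) auto
  have "1 / 2 \<le> 1 - (\<Sum>i<r. x ^ (t - i))"
    using sum_power_le_half[OF x] r \<open>s \<le> t\<close> by simp
  also have "\<dots> \<le> (\<Prod>i<r. 1 - x ^ (t - i))"
    using x by (intro one_minus_sum_le_prod_one_minus) (auto intro: power_le_one order.trans)
  finally have first: "1 / 2 \<le> (\<Prod>i<r. 1 - x ^ (t - i))" .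
  have "x ^ (t - r) \<le> x ^ 1"
    using x r \<open>s \<le> t\<close> by (intro power_decreasing) auto
  then have "1 / 2 \<le> 1 - x ^ (t - r)"
    using x by simp
  then have "1 / 2 * (1 / 2) \<le> (\<Prod>i<r. 1 - x ^ (t - i)) * (1 - x ^ (t - r))"
    using first by (intro mult_mono) auto
  then show ?thesis
    using r by simp
qed

lemma indep_tuples_count_ge:
  assumes "q \<ge> 2" "1 \<le> s" "s \<le> t"
  shows "real q ^ (t * s) / 4 \<le> indep_tuples_count q t s"
proof -
  define x :: real where "x = 1 / real q"
  have "real q ^ t - real q ^ i = real q ^ t * (1 - x ^ (t - i))" if "i < s" for i
  proof -
    have "real q ^ t = real q ^ i * real q ^ (t - i)"
      using that assms by (simp flip: power_add)
    then show ?thesis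
      using assms by (simp add: x_def power_divide algebra_simps)
  qed
  then have "indep_tuples_count q t s = real q ^ (t * s) * (\<Prod>i<s. 1 - x ^ (t - i))"
    unfolding indep_tuples_count_def by (simp add: prod.distrib power_mult)
  moreover have "1 / 4 \<le> (\<Prod>i<s. 1 - x ^ (t - i))"
    using assms by (intro prod_one_minus_power_ge) (auto simp: x_def field_simps)
  then have "real q ^ (t * s) * (1 / 4) \<le> real q ^ (t * s) * (\<Prod>i<s. 1 - x ^ (t - i))"
    by (intro mult_left_mono) auto
  ultimately show ?thesis
    by simp
qed

lemma gauss_binom_ratio_le:
  assumes "q \<ge> 2" "1 \<le> s" "s \<le> t" "t \<le> n"
  shows "gauss_binom q n s / gauss_binom q t s \<le> 4 * real q ^ (s * (n - t))"
proof -
  have "gauss_binom q n s / gauss_binom q t s \<le> real q ^ (n * s) / (real q ^ (t * s) / 4)"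
    unfolding gauss_binom_ratio[OF assms(1)] using assms
    by (intro frac_le indep_tuples_count_le indep_tuples_count_ge)
      (auto intro: less_imp_le[OF indep_tuples_count_pos])
  also have "real q ^ (n * s) = real q ^ (t * s) * real q ^ (s * (n - t))"
    using assms by (simp flip: power_add add: algebra_simps diff_mult_distrib2)
  finally show ?thesis
    using assms by simp
qed

lemma sum_gauss_binom_ratio_le:
  assumes "q \<ge> 2" "\<tau> < d" "d \<le> n"
  shows "(\<Sum>t = (d - 1) div 2 + 1..\<tau>. gauss_binom q n (2*t+1-d) / gauss_binom q t (2*t+1-d))
    \<le> 4 * (\<Sum>t = (d - 1) div 2 + 1..\<tau>. real q ^ ((2*t+1-d) * (n-t)))"
  unfolding sum_distrib_left using assms by (intro sum_mono gauss_binom_ratio_le) auto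

lemma sum_power_le_card_mult_max:
  assumes "q \<ge> 1"
  shows "(\<Sum>t = h + 1..\<tau>. real q ^ ((2*t+1-d) * (n-t))) \<le> real (\<tau> - h) * real q ^ ((2*\<tau>+1-d) * (n - h - 1))"
proof -
  have "(\<Sum>t = h + 1..\<tau>. real q ^ ((2*t+1-d) * (n-t))) \<le> (\<Sum>t = h + 1..\<tau>. real q ^ ((2*\<tau>+1-d) * (n - h - 1)))"
    using assms by (intro sum_mono power_increasing mult_le_mono) auto
  then show ?thesis
    by simp
qed

lemma indep_tuples_count_succ_two_le:
  assumes "q \<ge> 2" "h \<ge> 1" "2 * h + 1 \<le> n"
  shows "indep_tuples_count q (h + 1) 2 \<le> (real q ^ h - 1) * (real q ^ n - real q)"
proof -
  define a Q where "a = real q" and "Q = a ^ h"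
  have a: "a \<ge> 2" and Q: "Q \<ge> a"
    using assms power_increasing[of 1 h a] by (auto simp: a_def Q_def)
  have "a * Q * Q = a ^ (2 * h + 1)"
    by (simp add: Q_def mult_2 power_add)
  also have "\<dots> \<le> a ^ n"
    using assms a by (intro power_increasing) auto
  finally have aQQ: "a * Q * Q \<le> a ^ n" .
  have "indep_tuples_count q (h + 1) 2 = a * (Q - 1) * (a * Q - 1)"
    by (simp add: indep_tuples_count_def a_def Q_def numeral_2_eq_2 lessThan_Suc algebra_simps)
  also have "\<dots> \<le> a * (Q - 1) * (Q * Q - 1)"
    using a Q by (intro mult_left_mono mult_right_mono) auto
  also have "\<dots> = (Q - 1) * (a * Q * Q - a)"
    by (simp add: algebra_simps)
  also have "\<dots> \<le> (Q - 1) * (a ^ n - a)"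
    using aQQ a Q by (intro mult_left_mono) auto
  finally show ?thesis
    by (simp add: a_def Q_def)
qed

section \<open>Codewords in a rank ball\<close>

locale gabidulin_rank_ball = fq_subfield p e q m K for p e q m and K :: "'a :: {field, finite} set" +
  fixes alphas :: "'a list" and n k :: nat and r :: "'a list"
  assumes length_alphas: "length alphas = n" and alphas_indep: "q_indep q alphas {..<n}"
    and k_pos: "1 \<le> k" and k_le_n: "k \<le> n" and length_r: "length r = n"
begin

abbreviation code :: "'a list set" where
  "code \<equiv> gabidulin q alphas k"

definition error :: "'a list \<Rightarrow> 'a list" where
  "error x = map2 (-) x r"

definition level :: "nat \<Rightarrow> 'a list set" where
  "level t = {x \<in> code. rank_q q (error x) = t}"

lemma length_codeword: "x \<in> code \<Longrightarrow> length x = n"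
  using length_alphas by (auto simp: gabidulin_def)

lemma finite_code: "finite code"
  by (rule finite_gabidulin)

lemma length_error: "x \<in> code \<Longrightarrow> length (error x) = n"
  using length_codeword length_r by (simp add: error_def)

lemma map2_diff_error: "x \<in> code \<Longrightarrow> y \<in> code \<Longrightarrow> map2 (-) (error x) (error y) = map2 (-) x y"
  using length_codeword length_r by (intro nth_equalityI) (auto simp: error_def)

lemma distance_plus_common_rows_le:
  assumes "x \<in> code" "y \<in> code" "x \<noteq> y"
    and "ws \<in> Fn.indep_lists (row_space (error x) \<inter> row_space (error y)) j"
  shows "n - k + 1 + j \<le> rank_q q (error x) + rank_q q (error y)"
  using rank_diff_gabidulin_gt[OF length_alphas alphas_indep k_pos assms(1-3)]
    rank_map2_diff_add_le[OF _ assms(4)] length_error assms(1,2) map2_diff_error k_le_n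
  by fastforce

lemma indep_lists_row_space_disjoint:
  assumes "x \<in> code" "y \<in> code" "x \<noteq> y"
    and "rank_q q (error x) + rank_q q (error y) < n - k + 1 + s"
  shows "Fn.indep_lists (row_space (error x)) s \<inter> Fn.indep_lists (row_space (error y)) s = {}"
proof (rule ccontr)
  assume "Fn.indep_lists (row_space (error x)) s \<inter> Fn.indep_lists (row_space (error y)) s \<noteq> {}"
  then obtain ws where "ws \<in> Fn.indep_lists (row_space (error x) \<inter> row_space (error y)) s"
    by (auto simp: Fn.indep_lists_def)
  then show False
    using distance_plus_common_rows_le[OF assms(1-3)] assms(4) by fastforce
qed

lemma indep_lists_row_space_error_subset:
  "x \<in> code \<Longrightarrow> Fn.indep_lists (row_space (error x)) s \<subseteq> Fn.indep_lists (coord_space n) s"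
  using Fn.indep_lists_mono[OF row_space_subset[of "error x"]] length_error by simp

lemma finite_level: "finite (level t)"
  using finite_code by (simp add: level_def)

lemma card_indep_lists_coord_space: "card (Fn.indep_lists (coord_space n) s) = (\<Prod>i<s. q ^ n - q ^ i)"
  by (simp add: Fn.card_indep_lists[OF lin_subspace_coord_space finite_coord_space] card_coord_space)

text \<open>A codeword at rank distance \<open>t\<close> contributes the \<open>s\<close>-tuples of independent rows of its
  error; once \<open>2t < d + s\<close> these sets are disjoint for distinct codewords.\<close>
lemma card_level_mult_le_card_UN:
  assumes "2 * t < n - k + 1 + s"
  shows "card (level t) * (\<Prod>i<s. q ^ t - q ^ i) \<le> card (\<Union>x\<in>level t. Fn.indep_lists (row_space (error x)) s)"
proof (rule card_mult_le_card_UN_disjoint)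
  show "(\<Prod>i<s. q ^ t - q ^ i) \<le> card (Fn.indep_lists (row_space (error x)) s)" if "x \<in> level t" for x
    using that prod_le_card_indep_lists_row_space[of "error x" s] by (simp add: level_def)
  show "Fn.indep_lists (row_space (error x)) s \<inter> Fn.indep_lists (row_space (error y)) s = {}"
    if "x \<in> level t" "y \<in> level t" "x \<noteq> y" for x y
    using that assms by (intro indep_lists_row_space_disjoint) (auto simp: level_def)
qed (simp_all add: finite_level Fn.finite_indep_lists finite_row_space)

lemma UN_indep_lists_level_subset:
  "(\<Union>x\<in>level t. Fn.indep_lists (row_space (error x)) s) \<subseteq> Fn.indep_lists (coord_space n) s"
  using indep_lists_row_space_error_subset by (auto simp: level_def)

lemma card_level_mult_le:
  assumes "(n - k + 1 - 1) div 2 < t" "t < n - k + 1"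
  defines "s \<equiv> 2 * t + 1 - (n - k + 1)"
  shows "card (level t) * (\<Prod>i<s. q ^ t - q ^ i) \<le> (\<Prod>i<s. q ^ n - q ^ i)"
proof -
  have "card (level t) * (\<Prod>i<s. q ^ t - q ^ i) \<le> card (\<Union>x\<in>level t. Fn.indep_lists (row_space (error x)) s)"
    using assms by (intro card_level_mult_le_card_UN) auto
  also have "\<dots> \<le> card (Fn.indep_lists (coord_space n) s)"
    by (intro card_mono Fn.finite_indep_lists finite_coord_space UN_indep_lists_level_subset)
  finally show ?thesis
    by (simp add: card_indep_lists_coord_space)
qed

lemma snoc_not_in_indep_lists_next_level:
  assumes x0: "x0 \<in> code" "rank_q q (error x0) = h" and d: "n - k + 1 = 2 * h + 1"
    and x: "x \<in> level (h + 1)" and ws: "ws \<in> Fn.indep_lists (row_space (error x0)) 1"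
  shows "ws @ [w] \<notin> Fn.indep_lists (row_space (error x)) 2"
proof
  assume "ws @ [w] \<in> Fn.indep_lists (row_space (error x)) 2"
  then have "ws \<in> Fn.indep_lists (row_space (error x) \<inter> row_space (error x0)) 1"
    using ws Fn.snoc_in_indep_lists_iff[of ws 1 w "row_space (error x)"] by (auto simp: Fn.indep_lists_def)
  moreover have "x \<noteq> x0" "x \<in> code" "rank_q q (error x) = h + 1"
    using x x0 by (auto simp: level_def)
  ultimately show False
    using distance_plus_common_rows_le[of x x0 ws 1] x0 d by simp
qed

lemma card_next_level_refined:
  assumes x0: "x0 \<in> code" "rank_q q (error x0) = h" and d: "n - k + 1 = 2 * h + 1"
  shows "card (level (h + 1)) * (\<Prod>i<2. q ^ (h + 1) - q ^ i) + (q ^ h - 1) * (q ^ n - q)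
    \<le> (\<Prod>i<2. q ^ n - q ^ i)"
proof -
  let ?R0 = "row_space (error x0)" and ?U = "Fn.indep_lists (coord_space n) 2"
  let ?L = "\<Union>x\<in>level (h + 1). Fn.indep_lists (row_space (error x)) 2"
  define E where
    "E = {ws @ [w] | ws w. ws \<in> Fn.indep_lists ?R0 1 \<and> w \<in> coord_space n - Fn.lin_span (nth ws) {..<1}}"
  have R0_sub: "Fn.indep_lists ?R0 1 \<subseteq> Fn.indep_lists (coord_space n) 1"
    by (rule indep_lists_row_space_error_subset[OF x0(1)])
  have "q ^ h - 1 \<le> card (Fn.indep_lists ?R0 1)"
    using prod_le_card_indep_lists_row_space[of "error x0" 1] x0(2) by simp
  then have card_E: "(q ^ h - 1) * (q ^ n - q) \<le> card E"
    using Fn.card_snoc_indep_lists[OF lin_subspace_coord_space finite_coord_space R0_sub]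
    by (simp add: E_def card_coord_space)
  have "E \<subseteq> Fn.indep_lists (coord_space n) (Suc 1)"
    using R0_sub unfolding E_def Fn.indep_lists_Suc[of _ 1] by blast
  then have E_sub: "E \<subseteq> ?U"
    by (simp add: numeral_2_eq_2)
  then have "finite E"
    by (rule finite_subset) (simp add: Fn.finite_indep_lists finite_coord_space)
  moreover have "?L \<inter> E = {}"
    using snoc_not_in_indep_lists_next_level[OF x0 d] unfolding E_def by blast
  ultimately have "card ?L + card E = card (?L \<union> E)"
    by (intro card_Un_disjoint[symmetric]) (simp_all add: finite_level Fn.finite_indep_lists finite_row_space)
  also have "\<dots> \<le> card ?U"
    using UN_indep_lists_level_subset E_sub
    by (intro card_mono Fn.finite_indep_lists finite_coord_space) blast
  finally have "card ?L + card E \<le> (\<Prod>i<2. q ^ n - q ^ i)"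
    by (simp add: card_indep_lists_coord_space)
  moreover have "card (level (h + 1)) * (\<Prod>i<2. q ^ (h + 1) - q ^ i) \<le> card ?L"
    using d by (intro card_level_mult_le_card_UN) simp
  ultimately show ?thesis
    using card_E by linarith
qed

definition level_bound :: "nat \<Rightarrow> real" where
  "level_bound t = gauss_binom q n (2 * t + 1 - (n - k + 1)) / gauss_binom q t (2 * t + 1 - (n - k + 1))"

lemma one_le_level_bound:
  assumes "(n - k + 1 - 1) div 2 < t" "t < n - k + 1"
  shows "1 \<le> level_bound t"
  unfolding level_bound_def gauss_binom_ratio[OF q_ge_2] using assms k_pos k_le_n
  by (subst le_divide_eq_1_pos) (auto intro!: indep_tuples_count_pos indep_tuples_count_mono q_ge_2)

lemma card_level_le:
  assumes "(n - k + 1 - 1) div 2 < t" "t < n - k + 1"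
  shows "real (card (level t)) \<le> level_bound t"
proof -
  let ?s = "2 * t + 1 - (n - k + 1)"
  have st: "?s \<le> t" "t \<le> n"
    using assms k_pos by auto
  have "real (card (level t) * (\<Prod>i<?s. q ^ t - q ^ i)) \<le> real (\<Prod>i<?s. q ^ n - q ^ i)"
    using card_level_mult_le[OF assms] by (simp only: of_nat_le_iff)
  then have "real (card (level t)) * indep_tuples_count q t ?s \<le> indep_tuples_count q n ?s"
    using q_ge_2 st by (simp only: of_nat_mult of_nat_prod_power_diff)
  then show ?thesis
    unfolding level_bound_def gauss_binom_ratio[OF q_ge_2] using indep_tuples_count_pos[OF q_ge_2 st(1)]
    by (simp add: le_divide_eq)
qed

lemma card_next_level_plus_one_le:
  assumes x0: "x0 \<in> code" "rank_q q (error x0) = h" and d: "n - k + 1 = 2 * h + 1" and "h \<ge> 1"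
  shows "real (card (level (h + 1))) + 1 \<le> level_bound (h + 1)"
proof -
  let ?L = "real (card (level (h + 1)))"
  have n: "2 * h + 1 \<le> n"
    using d k_pos k_le_n by simp
  have "real (card (level (h + 1)) * (\<Prod>i<2. q ^ (h + 1) - q ^ i) + (q ^ h - 1) * (q ^ n - q))
      \<le> real (\<Prod>i<2. q ^ n - q ^ i)"
    using card_next_level_refined[OF x0 d] by (simp only: of_nat_le_iff)
  moreover have "real (\<Prod>i<2. q ^ (h + 1) - q ^ i) = indep_tuples_count q (h + 1) 2"
    "real (\<Prod>i<2. q ^ n - q ^ i) = indep_tuples_count q n 2"
    using q_ge_2 \<open>h \<ge> 1\<close> n by (intro of_nat_prod_power_diff; simp)+
  moreover have "real (q ^ h - 1) * real (q ^ n - q) = (real q ^ h - 1) * (real q ^ n - real q)"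
    using q_ge_2 n power_increasing[of 1 n q] by (simp add: of_nat_diff)
  ultimately have "?L * indep_tuples_count q (h + 1) 2 + (real q ^ h - 1) * (real q ^ n - real q)
      \<le> indep_tuples_count q n 2"
    by (simp only: of_nat_add of_nat_mult)
  then have "?L * indep_tuples_count q (h + 1) 2 + indep_tuples_count q (h + 1) 2 \<le> indep_tuples_count q n 2"
    using indep_tuples_count_succ_two_le[OF q_ge_2 \<open>h \<ge> 1\<close> n] by linarith
  moreover have "2 * (h + 1) + 1 - (n - k + 1) = 2"
    using d by simp
  then have "level_bound (h + 1) = indep_tuples_count q n 2 / indep_tuples_count q (h + 1) 2"
    by (simp only: level_bound_def gauss_binom_ratio[OF q_ge_2])
  moreover have "?L + 1 \<le> indep_tuples_count q n 2 / indep_tuples_count q (h + 1) 2"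
    using calculation(1) indep_tuples_count_pos[OF q_ge_2, of 2 "h + 1"] \<open>h \<ge> 1\<close>
    by (simp add: field_simps)
  ultimately show ?thesis
    by linarith
qed

lemma rank_ball_inter_code_eq:
  assumes "h \<le> \<tau>"
  shows "rank_ball q \<tau> r \<inter> code = {x\<in>code. rank_q q (error x) \<le> h} \<union> (\<Union>t\<in>{h+1..\<tau>}. level t)"
  using assms length_codeword length_r by (auto simp: rank_ball_def level_def error_def)

lemma card_close_le_1:
  assumes "2 * h < n - k + 1"
  shows "card {x\<in>code. rank_q q (error x) \<le> h} \<le> 1"
proof -
  have "x = y" if "x \<in> code" "y \<in> code" "rank_q q (error x) \<le> h" "rank_q q (error y) \<le> h" for x y
    using that assms distance_plus_common_rows_le[of x y "[]" 0]
    by (force simp: Fn.indep_lists_def Fn.lin_indep_def)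
  then show ?thesis
    using finite_code card_le_Suc0_iff_eq[of "{x\<in>code. rank_q q (error x) \<le> h}"] by auto
qed

lemma card_close_plus_next_level_le:
  defines "h \<equiv> (n - k + 1 - 1) div 2"
  assumes "h + 1 < n - k + 1"
  shows "real (card {x\<in>code. rank_q q (error x) \<le> h}) + real (card (level (h + 1))) \<le> level_bound (h + 1)"
proof (cases "{x\<in>code. rank_q q (error x) \<le> h} = {}")
  case True
  show ?thesis
    unfolding True using card_level_le[of "h + 1"] assms by simp
next
  case False
  then obtain x0 where x0: "x0 \<in> code" "rank_q q (error x0) \<le> h"
    by blast
  have "2 * h < n - k + 1"
    unfolding h_def by presburger
  then have "card {x\<in>code. rank_q q (error x) \<le> h} \<le> 1"
    by (rule card_close_le_1)
  moreover have "card {x\<in>code. rank_q q (error x) \<le> h} \<noteq> 0"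
    using False finite_code by simp
  ultimately have "card {x\<in>code. rank_q q (error x) \<le> h} = 1"
    by linarith
  moreover have "real (card (level (h + 1))) + 1 \<le> level_bound (h + 1)"
  proof (cases "rank_q q (error x0) + (h + 1) < n - k + 1")
    case True
    then have "level (h + 1) = {}"
      using x0 distance_plus_common_rows_le[of _ x0 "[]" 0]
      by (force simp: level_def Fn.indep_lists_def Fn.lin_indep_def)
    then show ?thesis
      using one_le_level_bound[of "h + 1"] assms by simp
  next
    case False
    then have "rank_q q (error x0) = h" "n - k + 1 = 2 * h + 1"
      using x0(2) h_def by auto
    then show ?thesis
      using card_next_level_plus_one_le[OF x0(1)] assms by simp
  qed
  ultimately show ?thesis
    by simp
qed

lemma card_rank_ball_inter_code_le:
  defines "h \<equiv> (n - k + 1 - 1) div 2"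
  assumes "h < \<tau>" "\<tau> < n - k + 1"
  shows "real (card (rank_ball q \<tau> r \<inter> code)) \<le> (\<Sum>t = h + 1..\<tau>. level_bound t)"
proof -
  let ?close = "{x\<in>code. rank_q q (error x) \<le> h}"
  have "card (rank_ball q \<tau> r \<inter> code) = card ?close + card (\<Union>t\<in>{h+1..\<tau>}. level t)"
    unfolding rank_ball_inter_code_eq[OF less_imp_le[OF assms(2)]]
    using finite_code finite_level by (intro card_Un_disjoint) (auto simp: level_def)
  also have "card (\<Union>t\<in>{h+1..\<tau>}. level t) = (\<Sum>t = h + 1..\<tau>. card (level t))"
    using finite_level by (intro card_UN_disjoint) (auto simp: level_def)
  also have "\<dots> = card (level (h + 1)) + (\<Sum>t = h + 2..\<tau>. card (level t))"
    using assms(2) by (simp add: sum.atLeast_Suc_atMost)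
  finally have "real (card (rank_ball q \<tau> r \<inter> code))
      = real (card ?close) + real (card (level (h + 1))) + (\<Sum>t = h + 2..\<tau>. real (card (level t)))"
    by simp
  also have "\<dots> \<le> level_bound (h + 1) + (\<Sum>t = h + 2..\<tau>. level_bound t)"
    using assms card_close_plus_next_level_le card_level_le
    by (intro add_mono sum_mono) (auto simp: h_def)
  also have "\<dots> = (\<Sum>t = h + 1..\<tau>. level_bound t)"
    using assms(2) by (simp add: sum.atLeast_Suc_atMost)
  finally show ?thesis .
qed

end

lemma Max_card_rank_ball_inter_gabidulin_le:
  fixes alphas :: "'a :: {field, finite} list"
  assumes "\<And>r. length r = n \<Longrightarrow> real (card (rank_ball q \<tau> r \<inter> gabidulin q alphas k)) \<le> b"
  shows "real (Max {card (rank_ball q \<tau> r \<inter> gabidulin q alphas k) | r :: 'a list. length r = n}) \<le> b"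
proof -
  let ?counts = "{card (rank_ball q \<tau> r \<inter> gabidulin q alphas k) | r :: 'a list. length r = n}"
  have "finite ?counts"
    by (rule finite_subset[of _ "{..card (gabidulin q alphas k)}"]) (auto intro: card_mono finite_gabidulin)
  moreover have "card (rank_ball q \<tau> (replicate n 0) \<inter> gabidulin q alphas k) \<in> ?counts"
    by auto
  ultimately show ?thesis
    using Max_in[of ?counts] assms by fastforce
qed

theorem theorem2:
  fixes alphas :: "('a::{field,finite}) list"
    and p e q m n k d \<tau> :: nat
  assumes "prime p" "e > 0" "q = p ^ e"
    and "card (UNIV :: 'a set) = q ^ m"
    and "n \<le> m"
    and "length alphas = n"
    and "q_indep q alphas {..<n}"
    and "1 \<le> k" "k \<le> n"
    and "d = n - k + 1"
    and "(d - 1) div 2 < \<tau>" "\<tau> < d"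
  shows "(\<forall>r::'a list. length r = n \<longrightarrow>
            real (card (rank_ball q \<tau> r \<inter> gabidulin q alphas k))
              \<le> (\<Sum>t = (d - 1) div 2 + 1..\<tau>.
                    gauss_binom q n (2*t+1-d) / gauss_binom q t (2*t+1-d)))
       \<and> real (Max {card (rank_ball q \<tau> r \<inter> gabidulin q alphas k) | r::'a list. length r = n})
              \<le> (\<Sum>t = (d - 1) div 2 + 1..\<tau>.
                    gauss_binom q n (2*t+1-d) / gauss_binom q t (2*t+1-d))
       \<and> (\<Sum>t = (d - 1) div 2 + 1..\<tau>.
                    gauss_binom q n (2*t+1-d) / gauss_binom q t (2*t+1-d))
              \<le> 4 * (\<Sum>t = (d - 1) div 2 + 1..\<tau>. real q ^ ((2*t+1-d) * (n-t)))
       \<and> 4 * (\<Sum>t = (d - 1) div 2 + 1..\<tau>. real q ^ ((2*t+1-d) * (n-t)))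
              \<le> 4 * real (\<tau> - (d - 1) div 2) * real q ^ ((2*\<tau>+1-d) * (n - (d - 1) div 2 - 1))"
proof -
  interpret fq_subfield p e q m "subfield_q q :: 'a set"
    by unfold_locales (use assms in auto)
  let ?bound = "\<Sum>t = (d - 1) div 2 + 1..\<tau>. gauss_binom q n (2*t+1-d) / gauss_binom q t (2*t+1-d)"
  have ball: "real (card (rank_ball q \<tau> r \<inter> gabidulin q alphas k)) \<le> ?bound" if "length r = n" for r
  proof -
    interpret gabidulin_rank_ball p e q m "subfield_q q :: 'a set" alphas n k r
      by unfold_locales (use assms that in auto)
    show ?thesis
      using card_rank_ball_inter_code_le[of \<tau>] assms(10-12) unfolding level_bound_def by simp
  qed
  moreover have "?bound \<le> 4 * (\<Sum>t = (d - 1) div 2 + 1..\<tau>. real q ^ ((2*t+1-d) * (n-t)))"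
    by (rule sum_gauss_binom_ratio_le[OF q_ge_2]) (use assms in auto)
  moreover have "4 * (\<Sum>t = (d - 1) div 2 + 1..\<tau>. real q ^ ((2*t+1-d) * (n-t)))
      \<le> 4 * real (\<tau> - (d - 1) div 2) * real q ^ ((2*\<tau>+1-d) * (n - (d - 1) div 2 - 1))"
    unfolding mult.assoc by (rule mult_left_mono[OF sum_power_le_card_mult_max]) (use q_ge_2 in auto)
  ultimately show ?thesis
    using ball Max_card_rank_ball_inter_gabidulin_le[OF ball] by blast
qed

end
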